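(* Let $\mathcal C$ be a discard category and let $\alpha,\beta$ be two regular stateful morphism sequences over $\mathcal C$ with the same input sequence $(A_i)_{i\ge1}$ and the same output sequence $(B_i)_{i\ge1}$. If $\alpha\equiv\beta$, then $\mathrm{FA}_k(\alpha)=\mathrm{FA}_k(\beta)$ for every $k\ge1$.
   Context: Monoidal categories are treated as strict (associators and unitors suppressed); $\sigma$ denotes the symmetry. A discard category is a symmetric monoidal category $(\mathcal C,\otimes,I)$ together with, for every object $A$, a morphism $\top_A:A\to I$ (the discard) such that $\top_I=\mathrm{id}_I$ and $\top_{A\otimes B}=\top_A\otimes\top_B$. A morphism $f:A\to B$ is causal if $\top_B\circ f=\top_A$. A stateful morphism sequence $\alpha$ over $\mathcal C$ consists of objects $(A_i)_{i\ge1}$ (inputs), $(B_i)_{i\ge1}$ (outputs), $(M_i)_{i\ge0}$ (memories) with $M_0=I$, and morphisms (layers) $\alpha_i\in\mathcal C(A_i\otimes M_{i-1},B_i\otimes M_i)$ for $i\ge1$. It is regular if there is $n$ such that for all $k\ge n$: $A_k=A_n$, $B_k=B_n$, $M_k=M_n$ and $\alpha_k=\alpha_n$. Composition and tensor of stateful sequences are defined layerwise: the memory of $\beta\circ\alpha$ (resp. $\alpha\otimes\beta$) at tick $k$ is $M^\alpha_k\otimes M^\beta_k$, and its $k$-th layer applies $\alpha_k$ and then $\beta_k$ (resp. $\alpha_k$ and $\beta_k$ side by side), with symmetries rearranging wires. The delay $D\alpha$ has $(D\alpha)_1=\mathrm{id}_I$ (with first input, output and memory $I$) and $(D\alpha)_k=\alpha_{k-1}$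 for $k\ge2$. Finite approximations: put $\Phi_1=\alpha_1:A_1\to B_1\otimes M_1$ and $\Phi_{k+1}=(\mathrm{id}_{B_1\otimes\cdots\otimes B_k}\otimes\alpha_{k+1})\circ(\mathrm{id}_{B_1\otimes\cdots\otimes B_k}\otimes\sigma_{M_k,A_{k+1}})\circ(\Phi_k\otimes\mathrm{id}_{A_{k+1}})$, a morphism $A_1\otimes\cdots\otimes A_{k+1}\to B_1\otimes\cdots\otimes B_{k+1}\otimes M_{k+1}$. Then $\mathrm{FA}_k(\alpha):=(\mathrm{id}_{B_1\otimes\cdots\otimes B_k}\otimes\top_{M_k})\circ\Phi_k$. The congruence $\equiv$: judgments $\Gamma\vdash\alpha=\beta$ between parallel regular stateful sequences, $\Gamma$ a set of such equations, are derived (by well-founded, possibly infinitely branching derivations) from: (hyp) $\Gamma\vdash\alpha=\beta$ if $(\alpha=\beta)\in\Gamma$; (CM) for $k\ge1$, $\beta_k\in\mathcal C(A_k\otimes M_{k-1},B_k\otimes N)$, a causal $c\in\mathcal C(N,M_k)$ and $\gamma\in\mathcal C(A_{k+1}\otimes M_k,B_{k+1}\otimes M_{k+1})$, the sequence with layers $k,k+1$ equal to $(\mathrm{id}\otimes c)\circ\beta_k,\gamma$ equals the sequence (memory $N$ at tick $k$) with layers $\beta_k,\gamma\circ(\mathrm{id}\otimes c)$, all other layers identical; (IM) for an idempotent $\pi\in\mathcal C(M_k,M_k)$, the sequence with layers $k,k+1$ equal to $(\mathrm{id}\otimes\pi)\circ\beta_k,\gamma$ equals the sequence with layers $(\mathrm{id}\otimes\pi)\circ\beta_k,\gamma\circ(\mathrm{id}\otimes\pi)$,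 others identical; reflexivity, symmetry, transitivity; closure under $\gamma\circ-$, $-\circ\gamma$, $\gamma\otimes-$, $-\otimes\gamma$; and coinduction: if $(\alpha^{(n)})_{n\ge0},(\beta^{(n)})_{n\ge0}$ are such that for every $n$, $\Gamma\cup\{D\alpha^{(n+1)}=D\beta^{(n+1)}\}\vdash\alpha^{(n)}=\beta^{(n)}$, then $\Gamma\vdash\alpha^{(0)}=\beta^{(0)}$. We write $\alpha\equiv\beta$ iff $\emptyset\vdash\alpha=\beta$. *)

theory Defs
  imports Main
begin

text \<open>Objects are the elements of type 'o, morphisms the elements of type 'm.
  ccomp g f is g after f (defined meaningfully when ccod f = cdom g).\<close>

record ('o, 'm) dcat =
  cdom  :: "'m \<Rightarrow> 'o"
  ccod  :: "'m \<Rightarrow> 'o"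
  ccomp :: "'m \<Rightarrow> 'm \<Rightarrow> 'm"
  cid   :: "'o \<Rightarrow> 'm"
  cunit :: "'o"
  cto   :: "'o \<Rightarrow> 'o \<Rightarrow> 'o"
  ctm   :: "'m \<Rightarrow> 'm \<Rightarrow> 'm"
  csym  :: "'o \<Rightarrow> 'o \<Rightarrow> 'm"
  cdisc :: "'o \<Rightarrow> 'm"

definition hom :: "('o, 'm) dcat \<Rightarrow> 'm \<Rightarrow> 'o \<Rightarrow> 'o \<Rightarrow> bool" where
  "hom C f A B \<longleftrightarrow> cdom C f = A \<and> ccod C f = B"

definition category :: "('o, 'm) dcat \<Rightarrow> bool" where
  "category C \<longleftrightarrow>
     (\<forall>A. hom C (cid C A) A A) \<and>
     (\<forall>f g. ccod C f = cdom C g \<longrightarrow> hom C (ccomp C g f) (cdom C f) (ccod C g)) \<and>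
     (\<forall>f. ccomp C f (cid C (cdom C f)) = f) \<and>
     (\<forall>f. ccomp C (cid C (ccod C f)) f = f) \<and>
     (\<forall>f g h. ccod C f = cdom C g \<longrightarrow> ccod C g = cdom C h \<longrightarrow>
        ccomp C h (ccomp C g f) = ccomp C (ccomp C h g) f)"

definition strict_monoidal :: "('o, 'm) dcat \<Rightarrow> bool" where
  "strict_monoidal C \<longleftrightarrow> category C \<and>
     (\<forall>f g. hom C (ctm C f g) (cto C (cdom C f) (cdom C g)) (cto C (ccod C f) (ccod C g))) \<and>
     (\<forall>A B D. cto C (cto C A B) D = cto C A (cto C B D)) \<and>
     (\<forall>A. cto C (cunit C) A = A \<and> cto C A (cunit C) = A) \<and>
     (\<forall>f g h. ctm C (ctm C f g) h = ctm C f (ctm C g h)) \<and>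
     (\<forall>f. ctm C (cid C (cunit C)) f = f \<and> ctm C f (cid C (cunit C)) = f) \<and>
     (\<forall>A B. ctm C (cid C A) (cid C B) = cid C (cto C A B)) \<and>
     (\<forall>f g f' g'. ccod C f = cdom C g \<longrightarrow> ccod C f' = cdom C g' \<longrightarrow>
        ctm C (ccomp C g f) (ccomp C g' f') = ccomp C (ctm C g g') (ctm C f f'))"

definition symmetric_monoidal :: "('o, 'm) dcat \<Rightarrow> bool" where
  "symmetric_monoidal C \<longleftrightarrow> strict_monoidal C \<and>
     (\<forall>A B. hom C (csym C A B) (cto C A B) (cto C B A)) \<and>
     (\<forall>f g. ccomp C (csym C (ccod C f) (ccod C g)) (ctm C f g)
            = ccomp C (ctm C g f) (csym C (cdom C f) (cdom C g))) \<and>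
     (\<forall>A B. ccomp C (csym C B A) (csym C A B) = cid C (cto C A B)) \<and>
     (\<forall>A B D. csym C A (cto C B D)
        = ccomp C (ctm C (cid C B) (csym C A D)) (ctm C (csym C A B) (cid C D)))"

definition discard_cat :: "('o, 'm) dcat \<Rightarrow> bool" where
  "discard_cat C \<longleftrightarrow> symmetric_monoidal C \<and>
     (\<forall>A. hom C (cdisc C A) A (cunit C)) \<and>
     cdisc C (cunit C) = cid C (cunit C) \<and>
     (\<forall>A B. cdisc C (cto C A B) = ctm C (cdisc C A) (cdisc C B))"

definition causal :: "('o, 'm) dcat \<Rightarrow> 'm \<Rightarrow> bool" where
  "causal C f \<longleftrightarrow> ccomp C (cdisc C (ccod C f)) f = cdisc C (cdom C f)"

text \<open>Indices of inp, outp, lay start at 1; index 0 is normalised to the unit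
  (resp. the identity on the unit). mem 0 is the unit M_0 = I.\<close>

record ('o, 'm) sseq =
  inp  :: "nat \<Rightarrow> 'o"
  outp :: "nat \<Rightarrow> 'o"
  mem  :: "nat \<Rightarrow> 'o"
  lay  :: "nat \<Rightarrow> 'm"

definition wf_seq :: "('o, 'm) dcat \<Rightarrow> ('o, 'm) sseq \<Rightarrow> bool" where
  "wf_seq C a \<longleftrightarrow>
     inp a 0 = cunit C \<and> outp a 0 = cunit C \<and> mem a 0 = cunit C \<and>
     lay a 0 = cid C (cunit C) \<and>
     (\<forall>i\<ge>1. hom C (lay a i) (cto C (inp a i) (mem a (i - 1))) (cto C (outp a i) (mem a i)))"

definition regular :: "('o, 'm) sseq \<Rightarrow> bool" where
  "regular a \<longleftrightarrow> (\<exists>n\<ge>1. \<forall>k\<ge>n. inp a k = inp a n \<and> outp a k = outp a n \<and>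
                               mem a k = mem a n \<and> lay a k = lay a n)"

definition good :: "('o, 'm) dcat \<Rightarrow> ('o, 'm) sseq \<Rightarrow> bool" where
  "good C a \<longleftrightarrow> wf_seq C a \<and> regular a"

text \<open>seq_comp C b a is b after a (requires outp a = inp b).\<close>
definition seq_comp :: "('o, 'm) dcat \<Rightarrow> ('o, 'm) sseq \<Rightarrow> ('o, 'm) sseq \<Rightarrow> ('o, 'm) sseq" where
  "seq_comp C b a =
     \<lparr> inp = inp a, outp = outp b,
       mem = (\<lambda>k. cto C (mem a k) (mem b k)),
       lay = (\<lambda>k. if k = 0 then cid C (cunit C) else
          ccomp C (ctm C (cid C (outp b k)) (csym C (mem b k) (mem a k)))
           (ccomp C (ctm C (lay b k) (cid C (mem a k)))
             (ccomp C (ctm C (cid C (outp a k)) (csym C (mem a k) (mem b (k - 1))))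
                (ctm C (lay a k) (cid C (mem b (k - 1))))))) \<rparr>"

definition seq_tens :: "('o, 'm) dcat \<Rightarrow> ('o, 'm) sseq \<Rightarrow> ('o, 'm) sseq \<Rightarrow> ('o, 'm) sseq" where
  "seq_tens C a b =
     \<lparr> inp = (\<lambda>k. cto C (inp a k) (inp b k)), outp = (\<lambda>k. cto C (outp a k) (outp b k)),
       mem = (\<lambda>k. cto C (mem a k) (mem b k)),
       lay = (\<lambda>k. if k = 0 then cid C (cunit C) else
          ccomp C (ctm C (ctm C (cid C (outp a k)) (csym C (mem a k) (outp b k))) (cid C (mem b k)))
           (ccomp C (ctm C (lay a k) (lay b k))
              (ctm C (ctm C (cid C (inp a k)) (csym C (inp b k) (mem a (k - 1)))) (cid C (mem b (k - 1)))))) \<rparr>"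

definition delay :: "('o, 'm) dcat \<Rightarrow> ('o, 'm) sseq \<Rightarrow> ('o, 'm) sseq" where
  "delay C a =
     \<lparr> inp = (\<lambda>k. if k \<le> 1 then cunit C else inp a (k - 1)),
       outp = (\<lambda>k. if k \<le> 1 then cunit C else outp a (k - 1)),
       mem = (\<lambda>k. if k \<le> 1 then cunit C else mem a (k - 1)),
       lay = (\<lambda>k. if k \<le> 1 then cid C (cunit C) else lay a (k - 1)) \<rparr>"

type_synonym ('o, 'm) eqn = "('o, 'm) sseq \<times> ('o, 'm) sseq"

inductive deriv :: "('o, 'm) dcat \<Rightarrow> ('o, 'm) eqn set \<Rightarrow> ('o, 'm) sseq \<Rightarrow> ('o, 'm) sseq \<Rightarrow> bool"
  for C :: "('o, 'm) dcat" where
  hyp: "(a, b) \<in> G \<Longrightarrow> deriv C G a b"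
| cm: "\<lbrakk> good C s; 1 \<le> k;
         hom C bk (cto C (inp s k) (mem s (k - 1))) (cto C (outp s k) N);
         hom C c N (mem s k); causal C c;
         hom C g (cto C (inp s (Suc k)) (mem s k)) (cto C (outp s (Suc k)) (mem s (Suc k))) \<rbrakk>
       \<Longrightarrow> deriv C G
            (s\<lparr>lay := (lay s)(k := ccomp C (ctm C (cid C (outp s k)) c) bk, Suc k := g)\<rparr>)
            (s\<lparr>mem := (mem s)(k := N),
               lay := (lay s)(k := bk, Suc k := ccomp C g (ctm C (cid C (inp s (Suc k))) c))\<rparr>)"
| im: "\<lbrakk> good C s; 1 \<le> k;
         hom C bk (cto C (inp s k) (mem s (k - 1))) (cto C (outp s k) (mem s k));
         hom C p (mem s k) (mem s k); ccomp C p p = p;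
         hom C g (cto C (inp s (Suc k)) (mem s k)) (cto C (outp s (Suc k)) (mem s (Suc k))) \<rbrakk>
       \<Longrightarrow> deriv C G
            (s\<lparr>lay := (lay s)(k := ccomp C (ctm C (cid C (outp s k)) p) bk, Suc k := g)\<rparr>)
            (s\<lparr>lay := (lay s)(k := ccomp C (ctm C (cid C (outp s k)) p) bk,
                              Suc k := ccomp C g (ctm C (cid C (inp s (Suc k))) p))\<rparr>)"
| refl: "good C a \<Longrightarrow> deriv C G a a"
| sym: "deriv C G a b \<Longrightarrow> deriv C G b a"
| trans: "deriv C G a b \<Longrightarrow> deriv C G b c \<Longrightarrow> deriv C G a c"
| comp_left: "\<lbrakk> deriv C G a b; good C h; outp a = inp h; outp b = inp h \<rbrakk>
       \<Longrightarrow> deriv C G (seq_comp C h a) (seq_comp C h b)"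
| comp_right: "\<lbrakk> deriv C G a b; good C h; outp h = inp a; outp h = inp b \<rbrakk>
       \<Longrightarrow> deriv C G (seq_comp C a h) (seq_comp C b h)"
| tens_left: "\<lbrakk> deriv C G a b; good C h \<rbrakk> \<Longrightarrow> deriv C G (seq_tens C h a) (seq_tens C h b)"
| tens_right: "\<lbrakk> deriv C G a b; good C h \<rbrakk> \<Longrightarrow> deriv C G (seq_tens C a h) (seq_tens C b h)"
| coind: "\<lbrakk> \<forall>n. good C (as n) \<and> good C (bs n) \<and> inp (as n) = inp (bs n) \<and> outp (as n) = outp (bs n);
           \<forall>n. deriv C (insert (delay C (as (Suc n)), delay C (bs (Suc n))) G) (as n) (bs n) \<rbrakk>
       \<Longrightarrow> deriv C G (as 0) (bs 0)"

definition sequiv :: "('o, 'm) dcat \<Rightarrow> ('o, 'm) sseq \<Rightarrow> ('o, 'm) sseq \<Rightarrow> bool" where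
  "sequiv C a b \<longleftrightarrow> deriv C {} a b"

fun outs :: "('o, 'm) dcat \<Rightarrow> ('o, 'm) sseq \<Rightarrow> nat \<Rightarrow> 'o" where
  "outs C a 0 = cunit C"
| "outs C a (Suc k) = cto C (outs C a k) (outp a (Suc k))"

fun Phi :: "('o, 'm) dcat \<Rightarrow> ('o, 'm) sseq \<Rightarrow> nat \<Rightarrow> 'm" where
  "Phi C a 0 = cid C (cunit C)"
| "Phi C a (Suc 0) = lay a 1"
| "Phi C a (Suc (Suc k)) =
     ccomp C (ctm C (cid C (outs C a (Suc k))) (lay a (Suc (Suc k))))
      (ccomp C (ctm C (cid C (outs C a (Suc k))) (csym C (mem a (Suc k)) (inp a (Suc (Suc k)))))
         (ctm C (Phi C a (Suc k)) (cid C (inp a (Suc (Suc k))))))"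

definition FA :: "('o, 'm) dcat \<Rightarrow> nat \<Rightarrow> ('o, 'm) sseq \<Rightarrow> 'm" where
  "FA C k a = ccomp C (ctm C (cid C (outs C a k)) (cdisc C (mem a k))) (Phi C a k)"

end

theory Submission
  imports Defs
begin

(*
  FA_k is invariant under each rule generating the congruence, and the invariant is
  step-indexed so that it survives coinduction.

  FA_k is functorial: FA_k (h o a) = FA_k h o FA_k a, and FA_k of a tensor product is the
  tensor product of the FA_k up to a reshuffling of wires, so the closure rules preserve
  equality of FA_k.  Rule CM moves a causal c across the memory wire between ticks k and k+1;
  this leaves Phi_j unchanged for j <> k, and at tick k the extra c is absorbed by the
  discard, since disc o c = disc.  Rule IM is the same with an idempotent p, which already
  occurs on the memory output of layer k.

  For coinduction, FA_(k+1) (D a) = FA_k a.  Hence if a and b agree on FA_0, ..., FA_n,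
  then D a and D b agree on FA_0, ..., FA_(n+1), and an induction on n feeds each premise of
  the coinduction rule from the level below.
*)

section \<open>Strict symmetric monoidal categories with discarding\<close>

locale discard_category =
  fixes C :: "('o, 'm) dcat"
  assumes discard_cat_C: "discard_cat C"
begin

abbreviation dcomp (infixr "\<cdot>" 55) where "g \<cdot> f \<equiv> ccomp C g f"
abbreviation dtensor (infixr "\<otimes>" 60) where "f \<otimes> g \<equiv> ctm C f g"
abbreviation dtensor_ob (infixr "\<oplus>" 60) where "A \<oplus> B \<equiv> cto C A B"
abbreviation ID where "ID A \<equiv> cid C A"
abbreviation \<I> where "\<I> \<equiv> cunit C"
abbreviation \<sigma> where "\<sigma> A B \<equiv> csym C A B"
abbreviation disc where "disc A \<equiv> cdisc C A"
abbreviation src where "src f \<equiv> cdom C f"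
abbreviation tgt where "tgt f \<equiv> ccod C f"

lemma category_C: "category C"
  and strict_monoidal_C: "strict_monoidal C"
  and symmetric_monoidal_C: "symmetric_monoidal C"
  using discard_cat_C unfolding discard_cat_def symmetric_monoidal_def strict_monoidal_def by auto

lemma src_id[simp]: "src (ID A) = A" and tgt_id[simp]: "tgt (ID A) = A"
  using category_C unfolding category_def hom_def by auto

lemma src_comp[simp]: "tgt f = src g \<Longrightarrow> src (g \<cdot> f) = src f"
  and tgt_comp[simp]: "tgt f = src g \<Longrightarrow> tgt (g \<cdot> f) = tgt g"
  using category_C unfolding category_def hom_def by auto

lemma comp_id[simp]: "X = src f \<Longrightarrow> f \<cdot> ID X = f"
  and id_comp[simp]: "X = tgt f \<Longrightarrow> ID X \<cdot> f = f"
  using category_C unfolding category_def by auto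

lemma comp_assoc[simp]: "tgt f = src g \<Longrightarrow> tgt g = src h \<Longrightarrow> (h \<cdot> g) \<cdot> f = h \<cdot> (g \<cdot> f)"
  using category_C unfolding category_def by auto

lemma src_tensor[simp]: "src (f \<otimes> g) = src f \<oplus> src g"
  and tgt_tensor[simp]: "tgt (f \<otimes> g) = tgt f \<oplus> tgt g"
  using strict_monoidal_C unfolding strict_monoidal_def hom_def by auto

lemma ob_assoc[simp]: "(A \<oplus> B) \<oplus> D = A \<oplus> (B \<oplus> D)"
  and ob_unit_left[simp]: "\<I> \<oplus> A = A" and ob_unit_right[simp]: "A \<oplus> \<I> = A"
  and tensor_assoc[simp]: "(f \<otimes> g) \<otimes> h = f \<otimes> (g \<otimes> h)"
  and tensor_unit_left[simp]: "ID \<I> \<otimes> f = f" and tensor_unit_right[simp]: "f \<otimes> ID \<I> = f"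
  using strict_monoidal_C unfolding strict_monoidal_def by auto

lemma id_ob: "ID (A \<oplus> B) = ID A \<otimes> ID B"
  using strict_monoidal_C unfolding strict_monoidal_def by auto

lemma tensor_ids[simp]: "ID A \<otimes> ID B = ID (A \<oplus> B)"
  and tensor_ids_assoc[simp]: "ID A \<otimes> (ID B \<otimes> f) = ID (A \<oplus> B) \<otimes> f"
  using id_ob tensor_assoc by metis+

lemma interchange: "tgt f = src g \<Longrightarrow> tgt f' = src g' \<Longrightarrow> (g \<cdot> f) \<otimes> (g' \<cdot> f') = (g \<otimes> g') \<cdot> (f \<otimes> f')"
  using strict_monoidal_C unfolding strict_monoidal_def by auto

lemma src_swap[simp]: "src (\<sigma> A B) = A \<oplus> B" and tgt_swap[simp]: "tgt (\<sigma> A B) = B \<oplus> A"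
  using symmetric_monoidal_C unfolding symmetric_monoidal_def hom_def by auto

lemma swap_natural: "\<sigma> (tgt f) (tgt g) \<cdot> (f \<otimes> g) = (g \<otimes> f) \<cdot> \<sigma> (src f) (src g)"
  and swap_swap: "\<sigma> B A \<cdot> \<sigma> A B = ID (A \<oplus> B)"
  and swap_ob_right: "\<sigma> A (B \<oplus> D) = (ID B \<otimes> \<sigma> A D) \<cdot> (\<sigma> A B \<otimes> ID D)"
  using symmetric_monoidal_C unfolding symmetric_monoidal_def by auto

lemma src_disc[simp]: "src (disc A) = A" and tgt_disc[simp]: "tgt (disc A) = \<I>"
  and disc_unit[simp]: "disc \<I> = ID \<I>" and disc_ob: "disc (A \<oplus> B) = disc A \<otimes> disc B"
  using discard_cat_C unfolding discard_cat_def hom_def by auto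

lemma swap_unit_right: "\<sigma> A \<I> = ID A" and swap_unit_left: "\<sigma> \<I> A = ID A"
proof -
  have h: "\<sigma> A \<I> = \<sigma> A \<I> \<cdot> \<sigma> A \<I>" using swap_ob_right[of A \<I> \<I>] by simp
  have i1: "\<sigma> \<I> A \<cdot> \<sigma> A \<I> = ID A" using swap_swap[of \<I> A] by simp
  have i2: "\<sigma> A \<I> \<cdot> \<sigma> \<I> A = ID A" using swap_swap[of A \<I>] by simp
  have "\<sigma> A \<I> = \<sigma> A \<I> \<cdot> (\<sigma> A \<I> \<cdot> \<sigma> \<I> A)" using i2 by simp
  also have "\<dots> = (\<sigma> A \<I> \<cdot> \<sigma> A \<I>) \<cdot> \<sigma> \<I> A" by simp
  also have "\<dots> = ID A" using h i2 by simp
  finally show a: "\<sigma> A \<I> = ID A" .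
  show "\<sigma> \<I> A = ID A" using i1 a by simp
qed

lemma whisker_left_comp: "tgt f = src g \<Longrightarrow> (ID X \<otimes> g) \<cdot> (ID X \<otimes> f) = ID X \<otimes> (g \<cdot> f)"
  using interchange[of "ID X" "ID X" f g] by simp

lemma whisker_left_comp_assoc:
  "tgt f = src g \<Longrightarrow> tgt h = src (ID X \<otimes> f) \<Longrightarrow>
    (ID X \<otimes> g) \<cdot> (ID X \<otimes> f) \<cdot> h = ID X \<otimes> (g \<cdot> f) \<cdot> h"
  by (simp add: whisker_left_comp[symmetric])

lemma whisker_right_comp: "tgt f = src g \<Longrightarrow> (g \<otimes> ID X) \<cdot> (f \<otimes> ID X) = (g \<cdot> f) \<otimes> ID X"
  using interchange[of f g "ID X" "ID X"] by simp

lemma tensor_as_comp_right_left: "(f \<otimes> ID (tgt g)) \<cdot> (ID (src f) \<otimes> g) = f \<otimes> g"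
  using interchange[of "ID (src f)" f g "ID (tgt g)"] by simp

lemma tensor_as_comp_left_right: "(ID (tgt f) \<otimes> g) \<cdot> (f \<otimes> ID (src g)) = f \<otimes> g"
  using interchange[of f "ID (tgt f)" "ID (src g)" g] by simp

lemma left_inverse_eq_right_inverse:
  assumes a: "tgt f = src g" "tgt q = src f" "g \<cdot> f = ID (src f)" "f \<cdot> q = ID (tgt f)"
  shows "q = g"
proof -
  have "q = ID (src f) \<cdot> q" using a by simp
  also have "\<dots> = (g \<cdot> f) \<cdot> q" using a by simp
  also have "\<dots> = g \<cdot> (f \<cdot> q)" using a by (rule_tac comp_assoc) simp_all
  also have "\<dots> = g" using a by simp
  finally show ?thesis .
qed

lemma swap_ob_left: "\<sigma> (X \<oplus> Y) Z = (\<sigma> X Z \<otimes> ID Y) \<cdot> (ID X \<otimes> \<sigma> Y Z)"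
proof -
  have "(\<sigma> X Z \<otimes> ID Y) \<cdot> (ID X \<otimes> \<sigma> Y Z) = \<sigma> (X \<oplus> Y) Z"
  proof (rule left_inverse_eq_right_inverse[of "\<sigma> Z (X \<oplus> Y)"])
    show "\<sigma> Z (X \<oplus> Y) \<cdot> (\<sigma> X Z \<otimes> ID Y) \<cdot> (ID X \<otimes> \<sigma> Y Z) = ID (tgt (\<sigma> Z (X \<oplus> Y)))"
    proof -
      have "\<sigma> Z (X \<oplus> Y) \<cdot> (\<sigma> X Z \<otimes> ID Y) \<cdot> (ID X \<otimes> \<sigma> Y Z)
          = (ID X \<otimes> \<sigma> Z Y) \<cdot> ((\<sigma> Z X \<otimes> ID Y) \<cdot> (\<sigma> X Z \<otimes> ID Y)) \<cdot> (ID X \<otimes> \<sigma> Y Z)"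
        by (simp add: swap_ob_right del: tensor_assoc)
      also have "\<dots> = (ID X \<otimes> \<sigma> Z Y) \<cdot> (ID X \<otimes> \<sigma> Y Z)"
        by (simp add: whisker_right_comp swap_swap del: tensor_assoc)
      also have "\<dots> = ID (X \<oplus> Y \<oplus> Z)" by (simp add: whisker_left_comp swap_swap)
      finally show ?thesis by simp
    qed
  qed (simp_all add: swap_swap)
  then show ?thesis by simp
qed

lemma comp_assoc_subst: "g \<cdot> f = k \<Longrightarrow> tgt f = src g \<Longrightarrow> tgt h = src f \<Longrightarrow> g \<cdot> f \<cdot> h = k \<cdot> h"
  by (metis comp_assoc)

lemma tensor_slide: "(f \<otimes> ID (tgt g)) \<cdot> (ID (src f) \<otimes> g) = (ID (tgt f) \<otimes> g) \<cdot> (f \<otimes> ID (src g))"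
  by (simp add: tensor_as_comp_right_left tensor_as_comp_left_right)

lemma tensor_slide_assoc:
  assumes "tgt h = src f \<oplus> src g"
  shows "(f \<otimes> ID (tgt g)) \<cdot> (ID (src f) \<otimes> g) \<cdot> h = (ID (tgt f) \<otimes> g) \<cdot> (f \<otimes> ID (src g)) \<cdot> h"
  using comp_assoc_subst[OF tensor_slide[of f g], of h] assms by simp

lemma comp_assoc_subst3:
  "a \<cdot> b \<cdot> c = d \<Longrightarrow> tgt c = src b \<Longrightarrow> tgt b = src a \<Longrightarrow> tgt h = src c \<Longrightarrow>
    a \<cdot> b \<cdot> c \<cdot> h = d \<cdot> h"
  by (metis comp_assoc tgt_comp src_comp)

lemma comp_inverse_cancel: "g \<cdot> f = ID Z \<Longrightarrow> tgt f = src g \<Longrightarrow> tgt h = src f \<Longrightarrow> g \<cdot> f \<cdot> h = h"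
  by (metis comp_assoc id_comp src_comp tgt_comp src_id)

lemma swap_swap_whiskered:
  "(ID X \<otimes> \<sigma> B A \<otimes> ID Y) \<cdot> (ID X \<otimes> \<sigma> A B \<otimes> ID Y) = ID (X \<oplus> A \<oplus> B \<oplus> Y)"
  "(\<sigma> B A \<otimes> ID Y) \<cdot> (\<sigma> A B \<otimes> ID Y) = ID (A \<oplus> B \<oplus> Y)"
  "(ID X \<otimes> \<sigma> B A) \<cdot> (ID X \<otimes> \<sigma> A B) = ID (X \<oplus> A \<oplus> B)"
  by (simp_all add: whisker_left_comp whisker_right_comp swap_swap del: tensor_assoc
      tensor_ids_assoc)

lemma swap_swap_whiskered_cancel:
  "tgt h = X \<oplus> A \<oplus> B \<oplus> Y \<Longrightarrow> (ID X \<otimes> \<sigma> B A \<otimes> ID Y) \<cdot> (ID X \<otimes> \<sigma> A B \<otimes> ID Y) \<cdot> h = h"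
  "tgt h = A \<oplus> B \<oplus> Y \<Longrightarrow> (\<sigma> B A \<otimes> ID Y) \<cdot> (\<sigma> A B \<otimes> ID Y) \<cdot> h = h"
  "tgt h = X \<oplus> A \<oplus> B \<Longrightarrow> (ID X \<otimes> \<sigma> B A) \<cdot> (ID X \<otimes> \<sigma> A B) \<cdot> h = h"
  using comp_inverse_cancel[OF swap_swap_whiskered(1)]
    comp_inverse_cancel[OF swap_swap_whiskered(2)] comp_inverse_cancel[OF swap_swap_whiskered(3)]
  by simp_all

lemma tensor_id_conj_swap:
  assumes "src g = A" "tgt g = B"
  shows "g \<otimes> ID Y = \<sigma> Y B \<cdot> (ID Y \<otimes> g) \<cdot> \<sigma> A Y"
proof -
  have n: "\<sigma> B Y \<cdot> (g \<otimes> ID Y) = (ID Y \<otimes> g) \<cdot> \<sigma> A Y" using swap_natural[of g "ID Y"] assms by simp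
  have "g \<otimes> ID Y = (\<sigma> Y B \<cdot> \<sigma> B Y) \<cdot> (g \<otimes> ID Y)" using assms by (simp add: swap_swap)
  also have "\<dots> = \<sigma> Y B \<cdot> (\<sigma> B Y \<cdot> (g \<otimes> ID Y))" using assms by (rule_tac comp_assoc) simp_all
  also have "\<dots> = \<sigma> Y B \<cdot> (ID Y \<otimes> g) \<cdot> \<sigma> A Y" unfolding n ..
  finally show ?thesis .
qed

lemmas swap_whisker_normal_form = swap_ob_right swap_ob_left
  whisker_left_comp[symmetric] whisker_right_comp[symmetric] whisker_left_comp_assoc[symmetric]
  swap_swap_whiskered swap_swap_whiskered_cancel

lemma swap_ob_ob: "(ID Ax \<otimes> \<sigma> Ay Mx \<otimes> ID My) \<cdot> \<sigma> (Mx \<oplus> My) (Ax \<oplus> Ay)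
    = (\<sigma> Mx Ax \<otimes> \<sigma> My Ay) \<cdot> (ID Mx \<otimes> \<sigma> My Ax \<otimes> ID Ay)"
  using comp_assoc_subst[OF tensor_as_comp_left_right[of "\<sigma> Mx Ax" "\<sigma> My Ay"]]
  by (simp add: swap_whisker_normal_form)

lemma swap_coherence_tgt: "(\<sigma> Bx Oy \<otimes> ID (By \<oplus> Mx' \<oplus> My')) \<cdot> (ID Bx \<otimes> \<sigma> Mx' (Oy \<oplus> By) \<otimes> ID My')
    \<cdot> (\<sigma> Oy (Bx \<oplus> Mx') \<otimes> ID (By \<oplus> My'))
   = ID (Oy \<oplus> Bx) \<otimes> \<sigma> Mx' By \<otimes> ID My'"
  using tensor_slide[of "\<sigma> Oy Bx" "\<sigma> Mx' By \<otimes> ID My'", symmetric]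
  by (simp add: swap_whisker_normal_form)

lemma swap_coherence_src: "(\<sigma> (Mx \<oplus> Ax) Oy \<otimes> ID (My \<oplus> Ay)) \<cdot> (ID Mx \<otimes> \<sigma> (Oy \<oplus> My) Ax \<otimes> ID Ay)
   = (ID (Oy \<oplus> Mx) \<otimes> \<sigma> My Ax \<otimes> ID Ay) \<cdot> (\<sigma> Mx Oy \<otimes> ID (My \<oplus> Ax \<oplus> Ay))"
  using tensor_slide[of "\<sigma> Mx Oy" "\<sigma> My Ax \<otimes> ID Ay"]
  by (simp add: swap_whisker_normal_form)

lemma tensor_comp_swap_interleave:
  assumes "src lx = Ax \<oplus> Mx" and "src ly = Ay \<oplus> My"
  shows "(lx \<otimes> ly) \<cdot> (ID Ax \<otimes> \<sigma> Ay Mx \<otimes> ID My) \<cdot> \<sigma> (Mx \<oplus> My) (Ax \<oplus> Ay)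
       = ((lx \<cdot> \<sigma> Mx Ax) \<otimes> (ly \<cdot> \<sigma> My Ay)) \<cdot> (ID Mx \<otimes> \<sigma> My Ax \<otimes> ID Ay)"
proof -
  have "(lx \<otimes> ly) \<cdot> (ID Ax \<otimes> \<sigma> Ay Mx \<otimes> ID My) \<cdot> \<sigma> (Mx \<oplus> My) (Ax \<oplus> Ay)
      = (lx \<otimes> ly) \<cdot> (\<sigma> Mx Ax \<otimes> \<sigma> My Ay) \<cdot> (ID Mx \<otimes> \<sigma> My Ax \<otimes> ID Ay)"
    using swap_ob_ob assms by simp
  also have "\<dots> = ((lx \<cdot> \<sigma> Mx Ax) \<otimes> (ly \<cdot> \<sigma> My Ay)) \<cdot> (ID Mx \<otimes> \<sigma> My Ax \<otimes> ID Ay)"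
    using assms interchange[of "\<sigma> Mx Ax" lx "\<sigma> My Ay" ly] by (simp del: tensor_assoc)
  finally show ?thesis .
qed

lemma tensor_id_middle_conj_swap:
  assumes "src g = A" and "tgt g = B"
  shows "g \<otimes> ID Y \<otimes> h = (\<sigma> Y B \<otimes> ID (tgt h)) \<cdot> (ID Y \<otimes> g \<otimes> h) \<cdot> (\<sigma> A Y \<otimes> ID (src h))"
proof -
  have "g \<otimes> ID Y \<otimes> h = (g \<otimes> ID Y) \<otimes> (ID (tgt h) \<cdot> h \<cdot> ID (src h))" by simp
  also have "\<dots> = (\<sigma> Y B \<cdot> (ID Y \<otimes> g) \<cdot> \<sigma> A Y) \<otimes> (ID (tgt h) \<cdot> h \<cdot> ID (src h))"
    using tensor_id_conj_swap[OF assms] by simp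
  also have "\<dots> = (\<sigma> Y B \<otimes> ID (tgt h)) \<cdot> (ID Y \<otimes> g \<otimes> h) \<cdot> (\<sigma> A Y \<otimes> ID (src h))"
    using assms interchange[of "(ID Y \<otimes> g) \<cdot> \<sigma> A Y" "\<sigma> Y B" "h \<cdot> ID (src h)" "ID (tgt h)"]
      interchange[of "\<sigma> A Y" "ID Y \<otimes> g" "ID (src h)" h] by (simp del: tensor_assoc) simp
  finally show ?thesis .
qed

section \<open>Finite approximations\<close>

fun ins :: "('o, 'm) sseq \<Rightarrow> nat \<Rightarrow> 'o" where
  "ins a 0 = \<I>"
| "ins a (Suc k) = ins a k \<oplus> inp a (Suc k)"

definition approx_step :: "'o \<Rightarrow> 'o \<Rightarrow> 'o \<Rightarrow> 'm \<Rightarrow> 'm \<Rightarrow> 'm" where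
  "approx_step Ob M A P l = (ID Ob \<otimes> l) \<cdot> (ID Ob \<otimes> \<sigma> M A) \<cdot> (P \<otimes> ID A)"

lemma src_layer[simp]: "wf_seq C a \<Longrightarrow> src (lay a (Suc j)) = inp a (Suc j) \<oplus> mem a j"
  and tgt_layer[simp]: "wf_seq C a \<Longrightarrow> tgt (lay a (Suc j)) = outp a (Suc j) \<oplus> mem a (Suc j)"
  unfolding wf_seq_def hom_def by (metis diff_Suc_1 le_add1 plus_1_eq_Suc)+

lemma wf_seqI:
  assumes "inp a 0 = \<I>" and "outp a 0 = \<I>" and "mem a 0 = \<I>" and "lay a 0 = ID \<I>"
    and "\<And>j. hom C (lay a (Suc j)) (inp a (Suc j) \<oplus> mem a j) (outp a (Suc j) \<oplus> mem a (Suc j))"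
  shows "wf_seq C a"
  unfolding wf_seq_def
proof (intro conjI allI impI)
  fix i :: nat
  assume "1 \<le> i"
  then obtain j where "i = Suc j" by (cases i) auto
  then show "hom C (lay a i) (inp a i \<oplus> mem a (i - 1)) (outp a i \<oplus> mem a i)"
    using assms(5) by simp
qed (use assms in simp_all)

lemma wf_seq_zero[simp]:
  assumes "wf_seq C a"
  shows "mem a 0 = \<I>" and "inp a 0 = \<I>" and "outp a 0 = \<I>"
  using assms unfolding wf_seq_def by auto

lemma approx_step_type:
  assumes "tgt P = Ob \<oplus> M" and "src l = A \<oplus> M"
  shows "src (approx_step Ob M A P l) = src P \<oplus> A \<and> tgt (approx_step Ob M A P l) = Ob \<oplus> tgt l"
  using assms unfolding approx_step_def by simp

lemma Phi_Suc:
  assumes "wf_seq C a"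
  shows "Phi C a (Suc j)
    = approx_step (outs C a j) (mem a j) (inp a (Suc j)) (Phi C a j) (lay a (Suc j))"
  using assms by (cases j) (simp_all add: approx_step_def swap_unit_left)

lemma Phi_type:
  "wf_seq C a \<Longrightarrow> src (Phi C a j) = ins a j \<and> tgt (Phi C a j) = outs C a j \<oplus> mem a j"
  by (induction j) (simp_all add: Phi_Suc approx_step_type)

lemma src_Phi[simp]: "wf_seq C a \<Longrightarrow> src (Phi C a j) = ins a j"
  and tgt_Phi[simp]: "wf_seq C a \<Longrightarrow> tgt (Phi C a j) = outs C a j \<oplus> mem a j"
  using Phi_type by auto

lemma outs_eq_prefix: "(\<forall>i\<le>j. outp a i = outp b i) \<Longrightarrow> outs C a j = outs C b j"
  by (induction j) auto

lemma outs_cong: "outp a = outp b \<Longrightarrow> outs C a j = outs C b j"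
  by (rule outs_eq_prefix) simp

lemma ins_cong: "inp a = inp b \<Longrightarrow> ins a j = ins b j"
  by (induction j) auto

lemma Phi_eq_prefix:
  assumes "\<forall>i\<le>j. lay a i = lay b i \<and> mem a i = mem b i \<and> inp a i = inp b i \<and> outp a i = outp b i"
  shows "Phi C a j = Phi C b j"
  using assms
proof (induction j)
  case 0 then show ?case by simp
next
  case (Suc j)
  show ?case
  proof (cases j)
    case 0 then show ?thesis using Suc.prems by simp
  next
    case (Suc k)
    have "outs C a j = outs C b j" using Suc.prems by (intro outs_eq_prefix) auto
    moreover have "Phi C a j = Phi C b j" using Suc.IH Suc.prems by simp
    ultimately show ?thesis using Suc.prems \<open>j = Suc k\<close> by simp
  qed
qed

lemma Phi_eq_suffix:
  assumes wa: "wf_seq C a" and wb: "wf_seq C b" and P: "Phi C a m = Phi C b m"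
    and o: "outp a = outp b"
    and r: "\<forall>i\<ge>m. mem a i = mem b i \<and> inp a (Suc i) = inp b (Suc i) \<and> lay a (Suc i) = lay b (Suc i)"
    and j: "m \<le> j"
  shows "Phi C a j = Phi C b j"
  using j
proof (induction j rule: dec_induct)
  case base then show ?case using P by simp
next
  case (step j)
  have "outs C a j = outs C b j" using o by (rule outs_cong)
  then show ?case using step wa wb r o by (simp add: Phi_Suc)
qed

lemma approx_step_post:
  assumes "tgt l = src f" and "tgt P = Ob \<oplus> M" and "src l = A \<oplus> M"
  shows "approx_step Ob M A P (f \<cdot> l) = (ID Ob \<otimes> f) \<cdot> approx_step Ob M A P l"
  using assms unfolding approx_step_def by (simp add: whisker_left_comp[symmetric])

lemma approx_step_slide:
  assumes "tgt c = M" "src c = N" "tgt P = Ob \<oplus> N" "src l = A \<oplus> M"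
  shows "approx_step Ob N A P (l \<cdot> (ID A \<otimes> c)) = approx_step Ob M A ((ID Ob \<otimes> c) \<cdot> P) l"
proof -
  have n: "(ID A \<otimes> c) \<cdot> \<sigma> N A = \<sigma> M A \<cdot> (c \<otimes> ID A)"
    using swap_natural[of c "ID A"] assms by simp
  have "approx_step Ob N A P (l \<cdot> (ID A \<otimes> c))
      = (ID Ob \<otimes> l) \<cdot> (ID Ob \<otimes> (ID A \<otimes> c)) \<cdot> (ID Ob \<otimes> \<sigma> N A) \<cdot> (P \<otimes> ID A)"
    unfolding approx_step_def using assms by (simp add: whisker_left_comp[symmetric])
  also have "\<dots> = (ID Ob \<otimes> l) \<cdot> (ID Ob \<otimes> ((ID A \<otimes> c) \<cdot> \<sigma> N A)) \<cdot> (P \<otimes> ID A)"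
    using assms by (simp add: whisker_left_comp_assoc[symmetric] del: tensor_assoc)
  also have "\<dots> = (ID Ob \<otimes> l) \<cdot> (ID Ob \<otimes> \<sigma> M A) \<cdot> (ID Ob \<otimes> (c \<otimes> ID A)) \<cdot> (P \<otimes> ID A)"
    using assms by (simp add: n whisker_left_comp_assoc[symmetric] del: tensor_assoc)
  also have "\<dots> = (ID Ob \<otimes> l) \<cdot> (ID Ob \<otimes> \<sigma> M A) \<cdot> (((ID Ob \<otimes> c) \<cdot> P) \<otimes> ID A)"
    using assms whisker_right_comp[of P "ID Ob \<otimes> c" A] by simp
  finally show ?thesis unfolding approx_step_def .
qed

section \<open>The memory rules\<close>

lemma wf_seq_update_layers:
  assumes ws: "wf_seq C s" and k: "1 \<le> k"
    and f: "hom C f (inp s k \<oplus> mem s (k - 1)) (outp s k \<oplus> N)"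
    and g: "hom C g (inp s (Suc k) \<oplus> N) (outp s (Suc k) \<oplus> mem s (Suc k))"
  shows "wf_seq C (s\<lparr>mem := (mem s)(k := N), lay := (lay s)(k := f, Suc k := g)\<rparr>)"
proof -
  have "hom C (lay s i) (inp s i \<oplus> mem s (i - 1)) (outp s i \<oplus> mem s i)" if "1 \<le> i" for i
    using ws that unfolding wf_seq_def by blast
  then show ?thesis
    using ws k f g unfolding wf_seq_def by auto
qed

lemma FA_eq_if_rewrite_at:
  assumes wL: "wf_seq C L" and wR: "wf_seq C R"
    and io: "inp L = inp R" "outp L = outp R"
    and mem_eq: "\<And>i. i \<noteq> k \<Longrightarrow> mem L i = mem R i"
    and lay_eq: "\<And>i. i \<noteq> k \<Longrightarrow> i \<noteq> Suc k \<Longrightarrow> lay L i = lay R i"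
    and Phi_eq: "Phi C L (Suc k) = Phi C R (Suc k)"
    and FA_eq: "FA C k L = FA C k R"
  shows "FA C j L = FA C j R"
proof -
  consider "j < k" | "j = k" | "Suc k \<le> j" by linarith
  then have "Phi C L j = Phi C R j \<and> mem L j = mem R j" if "j \<noteq> k"
  proof cases
    case 1
    then show ?thesis using io mem_eq lay_eq by (auto intro: Phi_eq_prefix)
  next
    case 3
    then show ?thesis using wL wR Phi_eq io mem_eq lay_eq by (auto intro: Phi_eq_suffix)
  qed (use that in simp)
  then show ?thesis
    using FA_eq outs_cong[OF io(2)] unfolding FA_def by (cases "j = k") auto
qed

lemma wf_seq_update_layer:
  assumes ws: "wf_seq C s" and k: "1 \<le> k"
    and f: "hom C f (inp s k \<oplus> mem s (k - 1)) (outp s k \<oplus> mem s k)"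
  shows "wf_seq C (s\<lparr>lay := (lay s)(k := f)\<rparr>)"
  using ws k f unfolding wf_seq_def by auto

lemma Phi_post_layer:
  assumes wL: "wf_seq C L" and wR: "wf_seq C R" and k: "1 \<le> k"
    and agree: "\<forall>i<k. lay L i = lay R i \<and> mem L i = mem R i \<and>
                        inp L i = inp R i \<and> outp L i = outp R i"
    and io: "inp L k = inp R k" "outp L k = outp R k"
    and lay_k: "lay L k = (ID (outp R k) \<otimes> c) \<cdot> lay R k" and c: "src c = mem R k"
  shows "Phi C L k = (ID (outs C R k) \<otimes> c) \<cdot> Phi C R k"
proof -
  obtain k' where kk: "k = Suc k'" using k by (cases k) auto
  have "Phi C L k' = Phi C R k'" by (rule Phi_eq_prefix) (use agree kk in auto)
  moreover have "outs C L k' = outs C R k'" by (rule outs_eq_prefix) (use agree kk in auto)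
  moreover have "mem L k' = mem R k'" using agree kk by auto
  ultimately have "Phi C L k = approx_step (outs C R k') (mem R k') (inp R k) (Phi C R k')
      ((ID (outp R k) \<otimes> c) \<cdot> lay R k)"
    using Phi_Suc[OF wL, of k'] kk io lay_k by simp
  also have "\<dots> = (ID (outs C R k') \<otimes> (ID (outp R k) \<otimes> c))
      \<cdot> approx_step (outs C R k') (mem R k') (inp R k) (Phi C R k') (lay R k)"
    by (rule approx_step_post) (use wR c kk in auto)
  also have "\<dots> = (ID (outs C R k) \<otimes> c) \<cdot> Phi C R k"
    using Phi_Suc[OF wR, of k'] kk by simp
  finally show ?thesis .
qed

lemma Phi_Suc_slide:
  assumes wL: "wf_seq C L" and wR: "wf_seq C R"
    and c: "src c = mem R k" "tgt c = mem L k"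
    and Phi_k: "Phi C L k = (ID (outs C R k) \<otimes> c) \<cdot> Phi C R k"
    and lay_Suc_k: "lay R (Suc k) = lay L (Suc k) \<cdot> (ID (inp R (Suc k)) \<otimes> c)"
    and os: "outs C L k = outs C R k" and i: "inp L (Suc k) = inp R (Suc k)"
  shows "Phi C L (Suc k) = Phi C R (Suc k)"
proof -
  have "Phi C R (Suc k)
      = approx_step (outs C R k) (mem R k) (inp R (Suc k)) (Phi C R k)
          (lay L (Suc k) \<cdot> (ID (inp R (Suc k)) \<otimes> c))"
    using Phi_Suc[OF wR, of k] lay_Suc_k by simp
  also have "\<dots> = approx_step (outs C R k) (mem L k) (inp R (Suc k))
      ((ID (outs C R k) \<otimes> c) \<cdot> Phi C R k) (lay L (Suc k))"
    by (rule approx_step_slide) (use wL wR c i in auto)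
  also have "\<dots> = Phi C L (Suc k)"
    using Phi_Suc[OF wL, of k] Phi_k os i by simp
  finally show ?thesis ..
qed

lemma FA_invariant_CM:
  assumes ws: "wf_seq C s" and k: "1 \<le> k"
    and hbk: "hom C bk (inp s k \<oplus> mem s (k - 1)) (outp s k \<oplus> N)"
    and hc: "hom C c N (mem s k)" and cc: "causal C c"
    and hg: "hom C g (inp s (Suc k) \<oplus> mem s k) (outp s (Suc k) \<oplus> mem s (Suc k))"
  defines "L \<equiv> s\<lparr>lay := (lay s)(k := (ID (outp s k) \<otimes> c) \<cdot> bk, Suc k := g)\<rparr>"
    and "R \<equiv> s\<lparr>mem := (mem s)(k := N),
                  lay := (lay s)(k := bk, Suc k := g \<cdot> (ID (inp s (Suc k)) \<otimes> c))\<rparr>"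
  shows "wf_seq C L" and "wf_seq C R" and "FA C j L = FA C j R"
proof -
  have tc: "src c = N" "tgt c = mem s k" using hc unfolding hom_def by auto
  have tb: "src bk = inp s k \<oplus> mem s (k - 1)" "tgt bk = outp s k \<oplus> N"
    using hbk unfolding hom_def by auto
  have tg: "src g = inp s (Suc k) \<oplus> mem s k" "tgt g = outp s (Suc k) \<oplus> mem s (Suc k)"
    using hg unfolding hom_def by auto
  show wL: "wf_seq C L"
    using wf_seq_update_layers[OF ws k, of "(ID (outp s k) \<otimes> c) \<cdot> bk" "mem s k" g] hbk hg tc tb
    unfolding L_def hom_def by simp
  show wR: "wf_seq C R"
    using wf_seq_update_layers[OF ws k hbk, of "g \<cdot> (ID (inp s (Suc k)) \<otimes> c)"] tc tg
    unfolding R_def hom_def by simp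
  have os: "outs C L i = outs C R i" for i
    by (rule outs_cong) (simp add: L_def R_def)
  have Phi_k: "Phi C L k = (ID (outs C R k) \<otimes> c) \<cdot> Phi C R k"
    by (rule Phi_post_layer[OF wL wR k]) (use tc in \<open>auto simp: L_def R_def\<close>)
  have Phi_Suc_k: "Phi C L (Suc k) = Phi C R (Suc k)"
    by (rule Phi_Suc_slide[OF wL wR _ _ Phi_k]) (use tc os in \<open>simp_all add: L_def R_def\<close>)
  have "FA C k L = (ID (outs C R k) \<otimes> disc (mem s k)) \<cdot> (ID (outs C R k) \<otimes> c) \<cdot> Phi C R k"
    unfolding FA_def Phi_k os by (simp add: L_def)
  also have "\<dots> = (ID (outs C R k) \<otimes> (disc (mem s k) \<cdot> c)) \<cdot> Phi C R k"
    using wR tc tgt_Phi[OF wR, of k]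
    by (simp add: whisker_left_comp_assoc[symmetric] R_def del: tensor_assoc)
  also have "disc (mem s k) \<cdot> c = disc N"
    using cc tc unfolding causal_def by simp
  finally have FA_k: "FA C k L = FA C k R"
    unfolding FA_def by (simp add: R_def)
  show "FA C j L = FA C j R"
    by (rule FA_eq_if_rewrite_at[OF wL wR _ _ _ _ Phi_Suc_k FA_k]) (auto simp: L_def R_def)
qed

lemma FA_invariant_IM:
  assumes ws: "wf_seq C s" and k: "1 \<le> k"
    and hbk: "hom C bk (inp s k \<oplus> mem s (k - 1)) (outp s k \<oplus> mem s k)"
    and hp: "hom C p (mem s k) (mem s k)" and pp: "p \<cdot> p = p"
    and hg: "hom C g (inp s (Suc k) \<oplus> mem s k) (outp s (Suc k) \<oplus> mem s (Suc k))"
  defines "L \<equiv> s\<lparr>lay := (lay s)(k := (ID (outp s k) \<otimes> p) \<cdot> bk, Suc k := g)\<rparr>"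
    and "R \<equiv> s\<lparr>lay := (lay s)(k := (ID (outp s k) \<otimes> p) \<cdot> bk,
                             Suc k := g \<cdot> (ID (inp s (Suc k)) \<otimes> p))\<rparr>"
  shows "wf_seq C L" and "wf_seq C R" and "FA C j L = FA C j R"
proof -
  have tp: "src p = mem s k" "tgt p = mem s k" using hp unfolding hom_def by auto
  have tb: "src bk = inp s k \<oplus> mem s (k - 1)" "tgt bk = outp s k \<oplus> mem s k"
    using hbk unfolding hom_def by auto
  have tg: "src g = inp s (Suc k) \<oplus> mem s k" "tgt g = outp s (Suc k) \<oplus> mem s (Suc k)"
    using hg unfolding hom_def by auto
  show wL: "wf_seq C L"
    using wf_seq_update_layers[OF ws k, of "(ID (outp s k) \<otimes> p) \<cdot> bk" "mem s k" g] hg tp tb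
    unfolding L_def hom_def by simp
  show wR: "wf_seq C R"
    using wf_seq_update_layers[OF ws k, of "(ID (outp s k) \<otimes> p) \<cdot> bk" "mem s k"
        "g \<cdot> (ID (inp s (Suc k)) \<otimes> p)"] tp tb tg
    unfolding R_def hom_def by simp
  have os: "outs C L i = outs C R i" for i
    by (rule outs_cong) (simp add: L_def R_def)
  have Phi_k: "Phi C L k = Phi C R k"
    by (rule Phi_eq_prefix) (auto simp: L_def R_def)
  have Phi_k_absorbs: "(ID (outs C R k) \<otimes> p) \<cdot> Phi C R k = Phi C R k"
  proof -
    define S where "S = s\<lparr>lay := (lay s)(k := bk)\<rparr>"
    have wS: "wf_seq C S"
      unfolding S_def by (rule wf_seq_update_layer[OF ws k hbk])
    have e: "Phi C R k = (ID (outs C R k) \<otimes> p) \<cdot> Phi C S k"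
      using Phi_post_layer[OF wR wS k, of p] outs_cong[of R S] tp by (simp add: R_def S_def)
    have "(ID (outs C R k) \<otimes> p) \<cdot> Phi C R k = (ID (outs C R k) \<otimes> (p \<cdot> p)) \<cdot> Phi C S k"
      unfolding e using wS tp outs_cong[of R S]
      by (simp add: whisker_left_comp_assoc[symmetric] R_def S_def del: tensor_assoc)
    then show ?thesis using e pp by simp
  qed
  have Phi_Suc_k: "Phi C L (Suc k) = Phi C R (Suc k)"
  proof (rule Phi_Suc_slide[OF wL wR])
    show "Phi C L k = (ID (outs C R k) \<otimes> p) \<cdot> Phi C R k"
      using Phi_k Phi_k_absorbs by simp
  qed (use tp os in \<open>simp_all add: L_def R_def\<close>)
  have FA_k: "FA C k L = FA C k R"
    unfolding FA_def using Phi_k os by (simp add: L_def R_def)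
  show "FA C j L = FA C j R"
    by (rule FA_eq_if_rewrite_at[OF wL wR _ _ _ _ Phi_Suc_k FA_k]) (auto simp: L_def R_def)
qed

section \<open>Delay\<close>

lemma wf_seq_delay:
  assumes "wf_seq C a"
  shows "wf_seq C (delay C a)"
proof -
  have "hom C (lay a i) (inp a i \<oplus> mem a (i - 1)) (outp a i \<oplus> mem a i)" if "1 \<le> i" for i
    using assms that unfolding wf_seq_def by blast
  then show ?thesis
    using assms unfolding wf_seq_def delay_def by (auto simp: hom_def Suc_le_eq)
qed

lemma outs_delay: "wf_seq C a \<Longrightarrow> outs C (delay C a) (Suc k) = outs C a k"
  by (induction k) (auto simp: delay_def)

lemma Phi_delay:
  assumes w: "wf_seq C a"
  shows "Phi C (delay C a) (Suc k) = Phi C a k"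
proof (induction k)
  case 0 then show ?case by (simp add: delay_def)
next
  case (Suc k)
  have "Phi C (delay C a) (Suc (Suc k))
      = approx_step (outs C a k) (mem a k) (inp a (Suc k)) (Phi C a k) (lay a (Suc k))"
    using Phi_Suc[OF wf_seq_delay[OF w], of "Suc k"] Suc outs_delay[OF w, of k] w
    by (cases k) (simp_all add: delay_def)
  then show ?case using Phi_Suc[OF w] by simp
qed

lemma FA_delay:
  assumes w: "wf_seq C a"
  shows "FA C (Suc k) (delay C a) = FA C k a"
proof -
  have "mem (delay C a) (Suc k) = mem a k" using w by (cases k) (auto simp: delay_def)
  then show ?thesis unfolding FA_def using Phi_delay[OF w] outs_delay[OF w] by simp
qed

lemma FA_0: "wf_seq C a \<Longrightarrow> FA C 0 a = ID \<I>"
  unfolding FA_def by simp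

section \<open>Sequential composition\<close>

lemma seq_comp_layer_swap:
  assumes t: "src la = A \<oplus> Ma" "tgt la = B \<oplus> Ma'"
  shows "(ID B \<otimes> \<sigma> Ma' Mh) \<cdot> (la \<otimes> ID Mh) \<cdot> \<sigma> (Ma \<oplus> Mh) A \<cdot> (\<sigma> Mh Ma \<otimes> ID A)
       = (\<sigma> Mh B \<otimes> ID Ma') \<cdot> (ID Mh \<otimes> la) \<cdot> (ID Mh \<otimes> \<sigma> Ma A)"
proof -
  have "(ID B \<otimes> \<sigma> Ma' Mh) \<cdot> (la \<otimes> ID Mh) \<cdot> \<sigma> (Ma \<oplus> Mh) A \<cdot> (\<sigma> Mh Ma \<otimes> ID A)
      = (ID B \<otimes> \<sigma> Ma' Mh) \<cdot> (la \<otimes> ID Mh) \<cdot> (\<sigma> Ma A \<otimes> ID Mh) \<cdot> (ID Ma \<otimes> \<sigma> Mh A) \<cdot> (\<sigma> Mh Ma \<otimes> ID A)"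
    by (simp add: swap_ob_left t)
  also have "\<dots> = (ID B \<otimes> \<sigma> Ma' Mh) \<cdot> ((la \<cdot> \<sigma> Ma A) \<otimes> ID Mh) \<cdot> \<sigma> Mh (Ma \<oplus> A)"
    using t by (simp add: swap_ob_right whisker_right_comp[symmetric] del: tensor_assoc)
  also have "((la \<cdot> \<sigma> Ma A) \<otimes> ID Mh) \<cdot> \<sigma> Mh (Ma \<oplus> A) = \<sigma> Mh (B \<oplus> Ma') \<cdot> (ID Mh \<otimes> (la \<cdot> \<sigma> Ma A))"
    using swap_natural[of "ID Mh" "la \<cdot> \<sigma> Ma A"] t by simp
  also have "(ID B \<otimes> \<sigma> Ma' Mh) \<cdot> \<sigma> Mh (B \<oplus> Ma') \<cdot> (ID Mh \<otimes> (la \<cdot> \<sigma> Ma A))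
      = (\<sigma> Mh B \<otimes> ID Ma') \<cdot> (ID Mh \<otimes> (la \<cdot> \<sigma> Ma A))"
  proof -
    have "(ID B \<otimes> \<sigma> Ma' Mh) \<cdot> \<sigma> Mh (B \<oplus> Ma') = (\<sigma> Mh B \<otimes> ID Ma')"
      by (simp add: swap_ob_right whisker_left_comp whisker_left_comp_assoc swap_swap
          del: tensor_assoc)
    then show ?thesis using t by (simp del: comp_assoc add: comp_assoc[symmetric])
  qed
  also have "\<dots> = (\<sigma> Mh B \<otimes> ID Ma') \<cdot> (ID Mh \<otimes> la) \<cdot> (ID Mh \<otimes> \<sigma> Ma A)"
    using t by (simp add: whisker_left_comp)
  finally show ?thesis .
qed

lemma approx_step_after_approx_step:
  assumes t: "tgt Pa = Oa \<oplus> Ma" "src Ph = Oa" "tgt Ph = Ob \<oplus> Mh"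
    "src la = A \<oplus> Ma" "tgt la = B \<oplus> Ma'" "src lh = B \<oplus> Mh"
  shows "(approx_step Ob Mh B Ph lh \<otimes> ID Ma') \<cdot> approx_step Oa Ma A Pa la
    = (ID Ob \<otimes> ((lh \<otimes> ID Ma') \<cdot> (\<sigma> Mh B \<otimes> ID Ma') \<cdot> (ID Mh \<otimes> la) \<cdot> (ID Mh \<otimes> \<sigma> Ma A)))
      \<cdot> (Ph \<otimes> ID (Ma \<oplus> A)) \<cdot> (Pa \<otimes> ID A)"
proof -
  have "(approx_step Ob Mh B Ph lh \<otimes> ID Ma') \<cdot> approx_step Oa Ma A Pa la
      = (ID Ob \<otimes> lh \<otimes> ID Ma') \<cdot> (ID Ob \<otimes> \<sigma> Mh B \<otimes> ID Ma') \<cdot> (Ph \<otimes> ID (B \<oplus> Ma'))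
        \<cdot> (ID Oa \<otimes> la) \<cdot> (ID Oa \<otimes> \<sigma> Ma A) \<cdot> (Pa \<otimes> ID A)"
    unfolding approx_step_def using t
    by (simp add: whisker_right_comp[symmetric] del: tensor_ids_assoc)
  also have "(Ph \<otimes> ID (B \<oplus> Ma')) \<cdot> (ID Oa \<otimes> la) \<cdot> (ID Oa \<otimes> \<sigma> Ma A) \<cdot> (Pa \<otimes> ID A)
      = (ID (Ob \<oplus> Mh) \<otimes> la) \<cdot> (Ph \<otimes> ID (A \<oplus> Ma)) \<cdot> (ID Oa \<otimes> \<sigma> Ma A) \<cdot> (Pa \<otimes> ID A)"
    using tensor_slide_assoc[of "(ID Oa \<otimes> \<sigma> Ma A) \<cdot> (Pa \<otimes> ID A)" Ph la] t by simp
  also have "(Ph \<otimes> ID (A \<oplus> Ma)) \<cdot> (ID Oa \<otimes> \<sigma> Ma A) \<cdot> (Pa \<otimes> ID A)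
      = (ID (Ob \<oplus> Mh) \<otimes> \<sigma> Ma A) \<cdot> (Ph \<otimes> ID (Ma \<oplus> A)) \<cdot> (Pa \<otimes> ID A)"
    using tensor_slide_assoc[of "Pa \<otimes> ID A" Ph "\<sigma> Ma A"] t by simp
  finally show ?thesis
    using t by (simp add: whisker_left_comp[symmetric])
qed

lemma approx_step_seq_comp:
  assumes t: "tgt Pa = Oa \<oplus> Ma" "src Ph = Oa" "tgt Ph = Ob \<oplus> Mh"
    "src la = A \<oplus> Ma" "tgt la = B \<oplus> Ma'" "src lh = B \<oplus> Mh" "tgt lh = D \<oplus> Mh'"
  shows "approx_step Ob (Ma \<oplus> Mh) A ((ID Ob \<otimes> \<sigma> Mh Ma) \<cdot> (Ph \<otimes> ID Ma) \<cdot> Pa)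
      ((ID D \<otimes> \<sigma> Mh' Ma') \<cdot> (lh \<otimes> ID Ma') \<cdot> (ID B \<otimes> \<sigma> Ma' Mh) \<cdot> (la \<otimes> ID Mh))
    = (ID (Ob \<oplus> D) \<otimes> \<sigma> Mh' Ma') \<cdot> (approx_step Ob Mh B Ph lh \<otimes> ID Ma') \<cdot> approx_step Oa Ma A Pa la"
proof -
  define K where "K = (lh \<otimes> ID Ma') \<cdot> (\<sigma> Mh B \<otimes> ID Ma') \<cdot> (ID Mh \<otimes> la) \<cdot> (ID Mh \<otimes> \<sigma> Ma A)"
  have tK: "src K = Mh \<oplus> Ma \<oplus> A" "tgt K = D \<oplus> Mh' \<oplus> Ma'" unfolding K_def using t by simp_all
  have "((ID Ob \<otimes> \<sigma> Mh Ma) \<cdot> (Ph \<otimes> ID Ma) \<cdot> Pa) \<otimes> ID A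
      = ((ID Ob \<otimes> \<sigma> Mh Ma) \<otimes> ID A) \<cdot> ((Ph \<otimes> ID Ma) \<otimes> ID A) \<cdot> (Pa \<otimes> ID A)"
    using t by (simp add: whisker_right_comp[symmetric])
  then have "approx_step Ob (Ma \<oplus> Mh) A ((ID Ob \<otimes> \<sigma> Mh Ma) \<cdot> (Ph \<otimes> ID Ma) \<cdot> Pa)
      ((ID D \<otimes> \<sigma> Mh' Ma') \<cdot> (lh \<otimes> ID Ma') \<cdot> (ID B \<otimes> \<sigma> Ma' Mh) \<cdot> (la \<otimes> ID Mh))
    = (ID Ob \<otimes> ((ID D \<otimes> \<sigma> Mh' Ma') \<cdot> (lh \<otimes> ID Ma') \<cdot> ((ID B \<otimes> \<sigma> Ma' Mh) \<cdot> (la \<otimes> ID Mh)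
        \<cdot> \<sigma> (Ma \<oplus> Mh) A \<cdot> (\<sigma> Mh Ma \<otimes> ID A)))) \<cdot> (Ph \<otimes> ID (Ma \<oplus> A)) \<cdot> (Pa \<otimes> ID A)"
    unfolding approx_step_def using t
    by (simp add: whisker_left_comp[symmetric] whisker_left_comp_assoc[symmetric])
  also have "\<dots> = (ID Ob \<otimes> ((ID D \<otimes> \<sigma> Mh' Ma') \<cdot> K)) \<cdot> (Ph \<otimes> ID (Ma \<oplus> A)) \<cdot> (Pa \<otimes> ID A)"
    unfolding K_def seq_comp_layer_swap[OF t(4,5)] using t by simp
  also have "\<dots> = (ID (Ob \<oplus> D) \<otimes> \<sigma> Mh' Ma') \<cdot> (ID Ob \<otimes> K) \<cdot> (Ph \<otimes> ID (Ma \<oplus> A)) \<cdot> (Pa \<otimes> ID A)"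
    using t tK by (simp add: whisker_left_comp_assoc[symmetric] del: tensor_assoc)
  also have "\<dots> = (ID (Ob \<oplus> D) \<otimes> \<sigma> Mh' Ma') \<cdot> (approx_step Ob Mh B Ph lh \<otimes> ID Ma')
      \<cdot> approx_step Oa Ma A Pa la"
    unfolding K_def approx_step_after_approx_step[OF t(1-6)] ..
  finally show ?thesis .
qed

lemma seq_comp_simps:
  shows "inp (seq_comp C h a) = inp a"
    and "outp (seq_comp C h a) = outp h"
    and "mem (seq_comp C h a) j = mem a j \<oplus> mem h j"
    and "lay (seq_comp C h a) (Suc j)
      = (ID (outp h (Suc j)) \<otimes> \<sigma> (mem h (Suc j)) (mem a (Suc j)))
        \<cdot> (lay h (Suc j) \<otimes> ID (mem a (Suc j)))
        \<cdot> (ID (outp a (Suc j)) \<otimes> \<sigma> (mem a (Suc j)) (mem h j)) \<cdot> (lay a (Suc j) \<otimes> ID (mem h j))"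
  unfolding seq_comp_def by simp_all

lemma wf_seq_comp:
  assumes wa: "wf_seq C a" and wh: "wf_seq C h" and o: "outp a = inp h"
  shows "wf_seq C (seq_comp C h a)"
proof (rule wf_seqI)
  show "hom C (lay (seq_comp C h a) (Suc j)) (inp (seq_comp C h a) (Suc j) \<oplus> mem (seq_comp C h a) j)
      (outp (seq_comp C h a) (Suc j) \<oplus> mem (seq_comp C h a) (Suc j))" for j
    using wa wh fun_cong[OF o, of "Suc j"] by (simp add: hom_def seq_comp_simps)
qed (use wa wh in \<open>simp_all add: seq_comp_def\<close>)

lemma ins_eq_outs: "outp a = inp h \<Longrightarrow> ins h j = outs C a j"
  by (induction j) auto

lemma Phi_seq_comp:
  assumes wa: "wf_seq C a" and wh: "wf_seq C h" and o: "outp a = inp h"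
  shows "Phi C (seq_comp C h a) j
    = (ID (outs C h j) \<otimes> \<sigma> (mem h j) (mem a j)) \<cdot> (Phi C h j \<otimes> ID (mem a j)) \<cdot> Phi C a j"
proof (induction j)
  case 0
  then show ?case using wa wh by (simp add: swap_unit_right)
next
  case (Suc j)
  have wc: "wf_seq C (seq_comp C h a)" by (rule wf_seq_comp[OF wa wh o])
  have os: "outs C (seq_comp C h a) j = outs C h j" by (rule outs_cong) (simp add: seq_comp_simps)
  have oo: "outp a (Suc j) = inp h (Suc j)" using o by simp
  have "Phi C (seq_comp C h a) (Suc j)
    = approx_step (outs C h j) (mem a j \<oplus> mem h j) (inp a (Suc j))
        ((ID (outs C h j) \<otimes> \<sigma> (mem h j) (mem a j)) \<cdot> (Phi C h j \<otimes> ID (mem a j)) \<cdot> Phi C a j)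
        ((ID (outp h (Suc j)) \<otimes> \<sigma> (mem h (Suc j)) (mem a (Suc j)))
          \<cdot> (lay h (Suc j) \<otimes> ID (mem a (Suc j)))
          \<cdot> (ID (outp a (Suc j)) \<otimes> \<sigma> (mem a (Suc j)) (mem h j)) \<cdot> (lay a (Suc j) \<otimes> ID (mem h j)))"
    using Phi_Suc[OF wc, of j] Suc os by (simp only: seq_comp_simps)
  also have "\<dots> = (ID (outs C h j \<oplus> outp h (Suc j)) \<otimes> \<sigma> (mem h (Suc j)) (mem a (Suc j)))
      \<cdot> (approx_step (outs C h j) (mem h j) (outp a (Suc j)) (Phi C h j) (lay h (Suc j))
          \<otimes> ID (mem a (Suc j)))
      \<cdot> approx_step (outs C a j) (mem a j) (inp a (Suc j)) (Phi C a j) (lay a (Suc j))"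
    by (rule approx_step_seq_comp) (use wa wh oo ins_eq_outs[OF o] in simp_all)
  also have "\<dots> = (ID (outs C h (Suc j)) \<otimes> \<sigma> (mem h (Suc j)) (mem a (Suc j)))
      \<cdot> (Phi C h (Suc j) \<otimes> ID (mem a (Suc j))) \<cdot> Phi C a (Suc j)"
    using Phi_Suc[OF wa, of j] Phi_Suc[OF wh, of j] oo by simp
  finally show ?case .
qed

lemma FA_seq_comp:
  assumes wa: "wf_seq C a" and wh: "wf_seq C h" and o: "outp a = inp h"
  shows "FA C j (seq_comp C h a) = FA C j h \<cdot> FA C j a"
proof -
  let ?Ob = "outs C h j" and ?Oa = "outs C a j" and ?Ma = "mem a j" and ?Mh = "mem h j"
  have os: "outs C (seq_comp C h a) j = ?Ob" by (rule outs_cong) (simp add: seq_comp_simps)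
  have io: "ins h j = ?Oa" by (rule ins_eq_outs[OF o])
  have "(disc ?Ma \<otimes> disc ?Mh) \<cdot> \<sigma> ?Mh ?Ma = disc ?Mh \<otimes> disc ?Ma"
    using swap_natural[of "disc ?Mh" "disc ?Ma"] by (simp add: swap_unit_right)
  then have discard_swap:
    "(ID ?Ob \<otimes> (disc ?Ma \<otimes> disc ?Mh)) \<cdot> (ID ?Ob \<otimes> \<sigma> ?Mh ?Ma) = ID ?Ob \<otimes> disc ?Mh \<otimes> disc ?Ma"
    using whisker_left_comp[of "\<sigma> ?Mh ?Ma" "disc ?Ma \<otimes> disc ?Mh" ?Ob] by simp
  have discard_h: "(ID ?Ob \<otimes> disc ?Mh \<otimes> disc ?Ma) \<cdot> (Phi C h j \<otimes> ID ?Ma) = FA C j h \<otimes> disc ?Ma"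
    unfolding FA_def using interchange[of "Phi C h j" "ID ?Ob \<otimes> disc ?Mh" "ID ?Ma" "disc ?Ma"] wh
    by simp
  have "FA C j (seq_comp C h a) = (ID ?Ob \<otimes> (disc ?Ma \<otimes> disc ?Mh)) \<cdot> (ID ?Ob \<otimes> \<sigma> ?Mh ?Ma)
      \<cdot> (Phi C h j \<otimes> ID ?Ma) \<cdot> Phi C a j"
    unfolding FA_def os Phi_seq_comp[OF wa wh o] by (simp add: seq_comp_simps disc_ob)
  also have "\<dots> = (ID ?Ob \<otimes> disc ?Mh \<otimes> disc ?Ma) \<cdot> (Phi C h j \<otimes> ID ?Ma) \<cdot> Phi C a j"
    by (rule comp_assoc_subst[OF discard_swap]) (use wa wh io in simp_all)
  also have "\<dots> = (FA C j h \<otimes> disc ?Ma) \<cdot> Phi C a j"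
    by (rule comp_assoc_subst[OF discard_h]) (use wa wh io in simp_all)
  also have "FA C j h \<otimes> disc ?Ma = FA C j h \<cdot> (ID ?Oa \<otimes> disc ?Ma)"
    using interchange[of "ID ?Oa" "FA C j h" "disc ?Ma" "ID \<I>"] wh io unfolding FA_def by simp
  also have "(FA C j h \<cdot> (ID ?Oa \<otimes> disc ?Ma)) \<cdot> Phi C a j = FA C j h \<cdot> FA C j a"
    unfolding FA_def[of C j a] by (rule comp_assoc) (use wa wh io in \<open>simp_all add: FA_def\<close>)
  finally show ?thesis .
qed

section \<open>Parallel composition\<close>

fun out_shuffle :: "('o, 'm) sseq \<Rightarrow> ('o, 'm) sseq \<Rightarrow> nat \<Rightarrow> 'm" where
  "out_shuffle x y 0 = ID \<I>"
| "out_shuffle x y (Suc j) = (out_shuffle x y j \<otimes> ID (outp x (Suc j) \<oplus> outp y (Suc j)))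
    \<cdot> (ID (outs C x j) \<otimes> \<sigma> (outp x (Suc j)) (outs C y j) \<otimes> ID (outp y (Suc j)))"

fun in_unshuffle :: "('o, 'm) sseq \<Rightarrow> ('o, 'm) sseq \<Rightarrow> nat \<Rightarrow> 'm" where
  "in_unshuffle x y 0 = ID \<I>"
| "in_unshuffle x y (Suc j) = (ID (ins x j) \<otimes> \<sigma> (ins y j) (inp x (Suc j)) \<otimes> ID (inp y (Suc j)))
    \<cdot> (in_unshuffle x y j \<otimes> ID (inp x (Suc j) \<oplus> inp y (Suc j)))"


lemma seq_tens_layer_swap:
  assumes t: "src lx = Ax \<oplus> Mx" "tgt lx = Bx \<oplus> Mx'" "src ly = Ay \<oplus> My" "tgt ly = By \<oplus> My'"
  shows "(\<sigma> Bx Oy \<otimes> ID (By \<oplus> Mx' \<oplus> My')) \<cdot> (ID Bx \<otimes> \<sigma> Mx' (Oy \<oplus> By) \<otimes> ID My')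
        \<cdot> ((lx \<cdot> \<sigma> Mx Ax) \<otimes> ID Oy \<otimes> (ly \<cdot> \<sigma> My Ay)) \<cdot> (ID Mx \<otimes> \<sigma> (Oy \<oplus> My) Ax \<otimes> ID Ay)
       = (ID Oy \<otimes> (((ID Bx \<otimes> \<sigma> Mx' By) \<otimes> ID My') \<cdot> (lx \<otimes> ly) \<cdot> ((ID Ax \<otimes> \<sigma> Ay Mx) \<otimes> ID My)
           \<cdot> \<sigma> (Mx \<oplus> My) (Ax \<oplus> Ay)))
         \<cdot> (\<sigma> Mx Oy \<otimes> ID (My \<oplus> Ax \<oplus> Ay))"
proof -
  define gx where "gx = lx \<cdot> \<sigma> Mx Ax"
  define gy where "gy = ly \<cdot> \<sigma> My Ay"
  have tg: "src gx = Mx \<oplus> Ax" "tgt gx = Bx \<oplus> Mx'" "src gy = My \<oplus> Ay" "tgt gy = By \<oplus> My'"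
    unfolding gx_def gy_def using t by simp_all
  have G: "((ID Bx \<otimes> \<sigma> Mx' By) \<otimes> ID My') \<cdot> (lx \<otimes> ly) \<cdot> ((ID Ax \<otimes> \<sigma> Ay Mx) \<otimes> ID My)
      \<cdot> \<sigma> (Mx \<oplus> My) (Ax \<oplus> Ay)
      = (ID Bx \<otimes> \<sigma> Mx' By \<otimes> ID My') \<cdot> (gx \<otimes> gy) \<cdot> (ID Mx \<otimes> \<sigma> My Ax \<otimes> ID Ay)"
    using tensor_comp_swap_interleave[OF t(1,3)] t tg unfolding gx_def gy_def by simp
  have X: "gx \<otimes> ID Oy \<otimes> gy = (\<sigma> Oy (Bx \<oplus> Mx') \<otimes> ID (By \<oplus> My')) \<cdot> (ID Oy \<otimes> gx \<otimes> gy)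
      \<cdot> (\<sigma> (Mx \<oplus> Ax) Oy \<otimes> ID (My \<oplus> Ay))"
    using tensor_id_middle_conj_swap[OF tg(1,2), of Oy gy] tg by simp
  have "(\<sigma> Bx Oy \<otimes> ID (By \<oplus> Mx' \<oplus> My')) \<cdot> (ID Bx \<otimes> \<sigma> Mx' (Oy \<oplus> By) \<otimes> ID My')
        \<cdot> (gx \<otimes> ID Oy \<otimes> gy) \<cdot> (ID Mx \<otimes> \<sigma> (Oy \<oplus> My) Ax \<otimes> ID Ay)
     = (\<sigma> Bx Oy \<otimes> ID (By \<oplus> Mx' \<oplus> My')) \<cdot> (ID Bx \<otimes> \<sigma> Mx' (Oy \<oplus> By) \<otimes> ID My')
         \<cdot> (\<sigma> Oy (Bx \<oplus> Mx') \<otimes> ID (By \<oplus> My'))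
        \<cdot> (ID Oy \<otimes> gx \<otimes> gy) \<cdot> (\<sigma> (Mx \<oplus> Ax) Oy \<otimes> ID (My \<oplus> Ay)) \<cdot> (ID Mx \<otimes> \<sigma> (Oy \<oplus> My) Ax \<otimes> ID Ay)"
    unfolding X using tg by simp
  also have "\<dots> = (ID (Oy \<oplus> Bx) \<otimes> \<sigma> Mx' By \<otimes> ID My') \<cdot> (ID Oy \<otimes> gx \<otimes> gy)
      \<cdot> (ID (Oy \<oplus> Mx) \<otimes> \<sigma> My Ax \<otimes> ID Ay) \<cdot> (\<sigma> Mx Oy \<otimes> ID (My \<oplus> Ax \<oplus> Ay))"
  proof -
    have p1: "(\<sigma> Bx Oy \<otimes> ID (By \<oplus> Mx' \<oplus> My')) \<cdot> (ID Bx \<otimes> \<sigma> Mx' (Oy \<oplus> By) \<otimes> ID My')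
        \<cdot> (\<sigma> Oy (Bx \<oplus> Mx') \<otimes> ID (By \<oplus> My')) \<cdot> h
       = (ID (Oy \<oplus> Bx) \<otimes> \<sigma> Mx' By \<otimes> ID My') \<cdot> h" if "tgt h = Oy \<oplus> Bx \<oplus> Mx' \<oplus> By \<oplus> My'" for h
      by (rule comp_assoc_subst3[OF swap_coherence_tgt]) (use that in simp_all)
    show ?thesis using tg by (simp add: p1 swap_coherence_src)
  qed
  also have "\<dots> = (ID Oy \<otimes> ((ID Bx \<otimes> \<sigma> Mx' By \<otimes> ID My') \<cdot> (gx \<otimes> gy) \<cdot> (ID Mx \<otimes> \<sigma> My Ax \<otimes> ID Ay)))
      \<cdot> (\<sigma> Mx Oy \<otimes> ID (My \<oplus> Ax \<oplus> Ay))"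
    using tg by (simp add: whisker_left_comp[symmetric] whisker_left_comp_assoc[symmetric])
  finally show ?thesis unfolding G[unfolded gx_def gy_def] unfolding gx_def gy_def .
qed

lemma approx_step_tensor:
  assumes t: "src Px = Ix" "tgt Px = Ox \<oplus> Mx" "src Py = Iy" "tgt Py = Oy \<oplus> My"
    "src lx = Ax \<oplus> Mx" "src ly = Ay \<oplus> My"
  shows "(approx_step Ox Mx Ax Px lx \<otimes> approx_step Oy My Ay Py ly) \<cdot> (ID Ix \<otimes> \<sigma> Iy Ax \<otimes> ID Ay)
    = (ID Ox \<otimes> (lx \<cdot> \<sigma> Mx Ax) \<otimes> ID Oy \<otimes> (ly \<cdot> \<sigma> My Ay))
      \<cdot> (ID (Ox \<oplus> Mx) \<otimes> \<sigma> (Oy \<oplus> My) Ax \<otimes> ID Ay) \<cdot> (Px \<otimes> Py \<otimes> ID (Ax \<oplus> Ay))"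
proof -
  have sx: "approx_step Ox Mx Ax Px lx = (ID Ox \<otimes> (lx \<cdot> \<sigma> Mx Ax)) \<cdot> (Px \<otimes> ID Ax)"
    unfolding approx_step_def using t by (simp add: whisker_left_comp[symmetric])
  have sy: "approx_step Oy My Ay Py ly = (ID Oy \<otimes> (ly \<cdot> \<sigma> My Ay)) \<cdot> (Py \<otimes> ID Ay)"
    unfolding approx_step_def using t by (simp add: whisker_left_comp[symmetric])
  have sxy: "approx_step Ox Mx Ax Px lx \<otimes> approx_step Oy My Ay Py ly
      = (ID Ox \<otimes> (lx \<cdot> \<sigma> Mx Ax) \<otimes> ID Oy \<otimes> (ly \<cdot> \<sigma> My Ay)) \<cdot> (Px \<otimes> ID Ax \<otimes> Py \<otimes> ID Ay)"
    unfolding sx sy using t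
      interchange[of "Px \<otimes> ID Ax" "ID Ox \<otimes> (lx \<cdot> \<sigma> Mx Ax)" "Py \<otimes> ID Ay" "ID Oy \<otimes> (ly \<cdot> \<sigma> My Ay)"]
    by simp
  have nat: "(ID Ax \<otimes> Py) \<cdot> \<sigma> Iy Ax = \<sigma> (Oy \<oplus> My) Ax \<cdot> (Py \<otimes> ID Ax)"
    using swap_natural[of Py "ID Ax"] t by simp
  have slideP: "(Px \<otimes> ID Ax \<otimes> Py \<otimes> ID Ay) \<cdot> (ID Ix \<otimes> \<sigma> Iy Ax \<otimes> ID Ay)
      = (ID (Ox \<oplus> Mx) \<otimes> \<sigma> (Oy \<oplus> My) Ax \<otimes> ID Ay) \<cdot> (Px \<otimes> Py \<otimes> ID (Ax \<oplus> Ay))"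
  proof -
    have "(Px \<otimes> ID Ax \<otimes> Py \<otimes> ID Ay) \<cdot> (ID Ix \<otimes> \<sigma> Iy Ax \<otimes> ID Ay)
        = Px \<otimes> (((ID Ax \<otimes> Py) \<cdot> \<sigma> Iy Ax) \<otimes> ID Ay)"
      using t interchange[of "ID Ix" Px "\<sigma> Iy Ax \<otimes> ID Ay" "ID Ax \<otimes> Py \<otimes> ID Ay"]
        interchange[of "\<sigma> Iy Ax" "ID Ax \<otimes> Py" "ID Ay" "ID Ay"]
      by (simp del: tensor_assoc) simp
    also have "\<dots> = Px \<otimes> ((\<sigma> (Oy \<oplus> My) Ax \<cdot> (Py \<otimes> ID Ax)) \<otimes> ID Ay)" unfolding nat ..
    also have "\<dots> = (ID (Ox \<oplus> Mx) \<otimes> \<sigma> (Oy \<oplus> My) Ax \<otimes> ID Ay) \<cdot> (Px \<otimes> Py \<otimes> ID (Ax \<oplus> Ay))"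
      using t interchange[of Px "ID (Ox \<oplus> Mx)" "(Py \<otimes> ID Ax) \<otimes> ID Ay" "\<sigma> (Oy \<oplus> My) Ax \<otimes> ID Ay"]
        interchange[of "Py \<otimes> ID Ax" "\<sigma> (Oy \<oplus> My) Ax" "ID Ay" "ID Ay"]
      by (simp del: tensor_assoc) simp
    finally show ?thesis .
  qed
  show ?thesis unfolding sxy using t slideP by simp
qed

lemma approx_step_seq_tens:
  assumes t: "src S = Ox \<oplus> Oy" "tgt N = Ix \<oplus> Iy"
    "src Px = Ix" "tgt Px = Ox \<oplus> Mx" "src Py = Iy" "tgt Py = Oy \<oplus> My"
    "src lx = Ax \<oplus> Mx" "tgt lx = Bx \<oplus> Mx'" "src ly = Ay \<oplus> My" "tgt ly = By \<oplus> My'"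
  shows "approx_step (tgt S) (Mx \<oplus> My) (Ax \<oplus> Ay)
      ((S \<otimes> ID (Mx \<oplus> My)) \<cdot> (ID Ox \<otimes> \<sigma> Mx Oy \<otimes> ID My) \<cdot> (Px \<otimes> Py) \<cdot> N)
      (((ID Bx \<otimes> \<sigma> Mx' By) \<otimes> ID My') \<cdot> (lx \<otimes> ly) \<cdot> ((ID Ax \<otimes> \<sigma> Ay Mx) \<otimes> ID My))
    = (((S \<otimes> ID (Bx \<oplus> By)) \<cdot> (ID Ox \<otimes> \<sigma> Bx Oy \<otimes> ID By)) \<otimes> ID (Mx' \<oplus> My'))
      \<cdot> (ID (Ox \<oplus> Bx) \<otimes> \<sigma> Mx' (Oy \<oplus> By) \<otimes> ID My')
      \<cdot> (approx_step Ox Mx Ax Px lx \<otimes> approx_step Oy My Ay Py ly)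
      \<cdot> ((ID Ix \<otimes> \<sigma> Iy Ax \<otimes> ID Ay) \<cdot> (N \<otimes> ID (Ax \<oplus> Ay)))"
    (is "?L = ?R")
proof -
  define R' where "R' = (\<sigma> Bx Oy \<otimes> ID (By \<oplus> Mx' \<oplus> My')) \<cdot> (ID Bx \<otimes> \<sigma> Mx' (Oy \<oplus> By) \<otimes> ID My')
    \<cdot> ((lx \<cdot> \<sigma> Mx Ax) \<otimes> ID Oy \<otimes> (ly \<cdot> \<sigma> My Ay)) \<cdot> (ID Mx \<otimes> \<sigma> (Oy \<oplus> My) Ax \<otimes> ID Ay)"
  define G where "G = ((ID Bx \<otimes> \<sigma> Mx' By) \<otimes> ID My') \<cdot> (lx \<otimes> ly) \<cdot> ((ID Ax \<otimes> \<sigma> Ay Mx) \<otimes> ID My)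
    \<cdot> \<sigma> (Mx \<oplus> My) (Ax \<oplus> Ay)"
  have tG: "src G = Mx \<oplus> My \<oplus> Ax \<oplus> Ay" "tgt G = Bx \<oplus> By \<oplus> Mx' \<oplus> My'"
    unfolding G_def using t by simp_all
  have core: "R' = (ID Oy \<otimes> G) \<cdot> (\<sigma> Mx Oy \<otimes> ID (My \<oplus> Ax \<oplus> Ay))"
    unfolding R'_def G_def by (rule seq_tens_layer_swap[OF t(7-10)])
  let ?W = "(ID Ox \<otimes> \<sigma> Mx Oy \<otimes> ID (My \<oplus> Ax \<oplus> Ay)) \<cdot> (Px \<otimes> Py \<otimes> ID (Ax \<oplus> Ay))
    \<cdot> (N \<otimes> ID (Ax \<oplus> Ay))"
  let ?Z = "(S \<otimes> ID (Bx \<oplus> By \<oplus> Mx' \<oplus> My')) \<cdot> (ID Ox \<otimes> R') \<cdot> (Px \<otimes> Py \<otimes> ID (Ax \<oplus> Ay))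
    \<cdot> (N \<otimes> ID (Ax \<oplus> Ay))"
  have "((S \<otimes> ID (Mx \<oplus> My)) \<cdot> (ID Ox \<otimes> \<sigma> Mx Oy \<otimes> ID My) \<cdot> (Px \<otimes> Py) \<cdot> N) \<otimes> ID (Ax \<oplus> Ay)
    = (S \<otimes> ID (Mx \<oplus> My \<oplus> Ax \<oplus> Ay)) \<cdot> ?W"
    using t by (simp add: whisker_right_comp[symmetric])
  then have "?L = (ID (tgt S) \<otimes> G) \<cdot> (S \<otimes> ID (Mx \<oplus> My \<oplus> Ax \<oplus> Ay)) \<cdot> ?W"
    unfolding approx_step_def G_def
    using t by (simp add: whisker_left_comp[symmetric] whisker_left_comp_assoc[symmetric])
  also have "\<dots> = (S \<otimes> ID (Bx \<oplus> By \<oplus> Mx' \<oplus> My')) \<cdot> (ID (Ox \<oplus> Oy) \<otimes> G) \<cdot> ?W"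
    using tensor_slide_assoc[of ?W S G] t tG by simp
  also have "\<dots> = ?Z"
    unfolding core using t tG
    by (simp add: whisker_left_comp[symmetric] whisker_left_comp_assoc[symmetric])
  finally have L: "?L = ?Z" .
  have "(approx_step Ox Mx Ax Px lx \<otimes> approx_step Oy My Ay Py ly) \<cdot> (ID Ix \<otimes> \<sigma> Iy Ax \<otimes> ID Ay) \<cdot> h
    = (ID Ox \<otimes> (lx \<cdot> \<sigma> Mx Ax) \<otimes> ID Oy \<otimes> (ly \<cdot> \<sigma> My Ay))
      \<cdot> (ID (Ox \<oplus> Mx) \<otimes> \<sigma> (Oy \<oplus> My) Ax \<otimes> ID Ay) \<cdot> (Px \<otimes> Py \<otimes> ID (Ax \<oplus> Ay)) \<cdot> h"
    if "tgt h = Ix \<oplus> Iy \<oplus> Ax \<oplus> Ay" for h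
    using comp_assoc_subst[OF approx_step_tensor[OF t(3-7,9)], of h] t that
    by (simp add: approx_step_type)
  then have "?R = (S \<otimes> ID (Bx \<oplus> By \<oplus> Mx' \<oplus> My')) \<cdot> (ID Ox \<otimes> \<sigma> Bx Oy \<otimes> ID (By \<oplus> Mx' \<oplus> My'))
      \<cdot> (ID (Ox \<oplus> Bx) \<otimes> \<sigma> Mx' (Oy \<oplus> By) \<otimes> ID My')
      \<cdot> (ID Ox \<otimes> (lx \<cdot> \<sigma> Mx Ax) \<otimes> ID Oy \<otimes> (ly \<cdot> \<sigma> My Ay))
      \<cdot> (ID (Ox \<oplus> Mx) \<otimes> \<sigma> (Oy \<oplus> My) Ax \<otimes> ID Ay) \<cdot> (Px \<otimes> Py \<otimes> ID (Ax \<oplus> Ay))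
      \<cdot> (N \<otimes> ID (Ax \<oplus> Ay))"
    using t by (simp add: whisker_right_comp[symmetric])
  also have "\<dots> = ?Z"
    unfolding R'_def using t
    by (simp add: whisker_left_comp[symmetric] whisker_left_comp_assoc[symmetric])
  finally show ?thesis using L by simp
qed

lemma seq_tens_simps:
  shows "inp (seq_tens C x y) k = inp x k \<oplus> inp y k"
    and "outp (seq_tens C x y) k = outp x k \<oplus> outp y k"
    and "mem (seq_tens C x y) k = mem x k \<oplus> mem y k"
    and "lay (seq_tens C x y) (Suc j)
      = ((ID (outp x (Suc j)) \<otimes> \<sigma> (mem x (Suc j)) (outp y (Suc j))) \<otimes> ID (mem y (Suc j)))
        \<cdot> (lay x (Suc j) \<otimes> lay y (Suc j))
        \<cdot> ((ID (inp x (Suc j)) \<otimes> \<sigma> (inp y (Suc j)) (mem x j)) \<otimes> ID (mem y j))"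
  unfolding seq_tens_def by simp_all

lemma wf_seq_tens:
  assumes wx: "wf_seq C x" and wy: "wf_seq C y"
  shows "wf_seq C (seq_tens C x y)"
proof (rule wf_seqI)
  show "hom C (lay (seq_tens C x y) (Suc j)) (inp (seq_tens C x y) (Suc j) \<oplus> mem (seq_tens C x y) j)
      (outp (seq_tens C x y) (Suc j) \<oplus> mem (seq_tens C x y) (Suc j))" for j
    using wx wy by (simp add: hom_def seq_tens_simps)
qed (use wx wy in \<open>simp_all add: seq_tens_def\<close>)

lemma out_shuffle_type:
  "src (out_shuffle x y j) = outs C x j \<oplus> outs C y j \<and>
   tgt (out_shuffle x y j) = outs C (seq_tens C x y) j"
  by (induction j) (simp_all add: seq_tens_simps)

lemma in_unshuffle_type:
  "src (in_unshuffle x y j) = ins (seq_tens C x y) j \<and>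
   tgt (in_unshuffle x y j) = ins x j \<oplus> ins y j"
  by (induction j) (simp_all add: seq_tens_simps)

lemma src_out_shuffle[simp]: "src (out_shuffle x y j) = outs C x j \<oplus> outs C y j"
  and tgt_out_shuffle[simp]: "tgt (out_shuffle x y j) = outs C (seq_tens C x y) j"
  and src_in_unshuffle[simp]: "src (in_unshuffle x y j) = ins (seq_tens C x y) j"
  and tgt_in_unshuffle[simp]: "tgt (in_unshuffle x y j) = ins x j \<oplus> ins y j"
  using out_shuffle_type in_unshuffle_type by auto

lemma Phi_seq_tens:
  assumes wx: "wf_seq C x" and wy: "wf_seq C y"
  shows "Phi C (seq_tens C x y) j
    = (out_shuffle x y j \<otimes> ID (mem x j \<oplus> mem y j))
      \<cdot> (ID (outs C x j) \<otimes> \<sigma> (mem x j) (outs C y j) \<otimes> ID (mem y j))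
      \<cdot> (Phi C x j \<otimes> Phi C y j) \<cdot> in_unshuffle x y j"
proof (induction j)
  case 0
  then show ?case using wx wy by (simp add: swap_unit_right)
next
  case (Suc j)
  have wT: "wf_seq C (seq_tens C x y)" by (rule wf_seq_tens[OF wx wy])
  have "Phi C (seq_tens C x y) (Suc j)
    = approx_step (tgt (out_shuffle x y j)) (mem x j \<oplus> mem y j) (inp x (Suc j) \<oplus> inp y (Suc j))
        ((out_shuffle x y j \<otimes> ID (mem x j \<oplus> mem y j))
          \<cdot> (ID (outs C x j) \<otimes> \<sigma> (mem x j) (outs C y j) \<otimes> ID (mem y j))
          \<cdot> (Phi C x j \<otimes> Phi C y j) \<cdot> in_unshuffle x y j)
        (((ID (outp x (Suc j)) \<otimes> \<sigma> (mem x (Suc j)) (outp y (Suc j))) \<otimes> ID (mem y (Suc j)))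
          \<cdot> (lay x (Suc j) \<otimes> lay y (Suc j))
          \<cdot> ((ID (inp x (Suc j)) \<otimes> \<sigma> (inp y (Suc j)) (mem x j)) \<otimes> ID (mem y j)))"
    using Phi_Suc[OF wT, of j] Suc by (simp only: seq_tens_simps tgt_out_shuffle)
  also have "\<dots> = (((out_shuffle x y j \<otimes> ID (outp x (Suc j) \<oplus> outp y (Suc j)))
        \<cdot> (ID (outs C x j) \<otimes> \<sigma> (outp x (Suc j)) (outs C y j) \<otimes> ID (outp y (Suc j))))
        \<otimes> ID (mem x (Suc j) \<oplus> mem y (Suc j)))
      \<cdot> (ID (outs C x j \<oplus> outp x (Suc j))
          \<otimes> \<sigma> (mem x (Suc j)) (outs C y j \<oplus> outp y (Suc j)) \<otimes> ID (mem y (Suc j)))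
      \<cdot> (approx_step (outs C x j) (mem x j) (inp x (Suc j)) (Phi C x j) (lay x (Suc j))
          \<otimes> approx_step (outs C y j) (mem y j) (inp y (Suc j)) (Phi C y j) (lay y (Suc j)))
      \<cdot> ((ID (ins x j) \<otimes> \<sigma> (ins y j) (inp x (Suc j)) \<otimes> ID (inp y (Suc j)))
          \<cdot> (in_unshuffle x y j \<otimes> ID (inp x (Suc j) \<oplus> inp y (Suc j))))"
    by (rule approx_step_seq_tens) (use wx wy in simp_all)
  also have "\<dots> = (out_shuffle x y (Suc j) \<otimes> ID (mem x (Suc j) \<oplus> mem y (Suc j)))
      \<cdot> (ID (outs C x (Suc j)) \<otimes> \<sigma> (mem x (Suc j)) (outs C y (Suc j)) \<otimes> ID (mem y (Suc j)))
      \<cdot> (Phi C x (Suc j) \<otimes> Phi C y (Suc j)) \<cdot> in_unshuffle x y (Suc j)"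
    using Phi_Suc[OF wx, of j] Phi_Suc[OF wy, of j] by simp
  finally show ?case .
qed

lemma out_shuffle_cong:
  "outp x = outp x' \<Longrightarrow> outp y = outp y' \<Longrightarrow> out_shuffle x y j = out_shuffle x' y' j"
  by (induction j) (simp_all add: outs_cong[of x x'] outs_cong[of y y'])

lemma in_unshuffle_cong:
  "inp x = inp x' \<Longrightarrow> inp y = inp y' \<Longrightarrow> in_unshuffle x y j = in_unshuffle x' y' j"
  by (induction j) (simp_all add: ins_cong[of x x'] ins_cong[of y y'])

lemma FA_seq_tens:
  assumes wx: "wf_seq C x" and wy: "wf_seq C y"
  shows "FA C j (seq_tens C x y) = out_shuffle x y j \<cdot> (FA C j x \<otimes> FA C j y) \<cdot> in_unshuffle x y j"
proof -
  let ?Ox = "outs C x j" and ?Oy = "outs C y j" and ?Mx = "mem x j" and ?My = "mem y j"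
  let ?S = "out_shuffle x y j" and ?N = "in_unshuffle x y j"
  let ?Px = "Phi C x j" and ?Py = "Phi C y j"
  have "(ID ?Oy \<otimes> disc ?Mx) \<cdot> \<sigma> ?Mx ?Oy = disc ?Mx \<otimes> ID ?Oy"
    using swap_natural[of "disc ?Mx" "ID ?Oy"] by (simp add: swap_unit_left)
  moreover have "(ID (?Ox \<oplus> ?Oy) \<otimes> disc ?Mx \<otimes> disc ?My) \<cdot> (ID ?Ox \<otimes> \<sigma> ?Mx ?Oy \<otimes> ID ?My)
      = ID ?Ox \<otimes> (((ID ?Oy \<otimes> disc ?Mx) \<cdot> \<sigma> ?Mx ?Oy) \<otimes> (disc ?My \<cdot> ID ?My))"
    using interchange[of "\<sigma> ?Mx ?Oy" "ID ?Oy \<otimes> disc ?Mx" "ID ?My" "disc ?My"]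
      whisker_left_comp[of "\<sigma> ?Mx ?Oy \<otimes> ID ?My" "ID ?Oy \<otimes> disc ?Mx \<otimes> disc ?My" ?Ox]
    by (simp del: tensor_assoc) simp
  ultimately have discard_swap:
    "(ID (?Ox \<oplus> ?Oy) \<otimes> disc ?Mx \<otimes> disc ?My) \<cdot> (ID ?Ox \<otimes> \<sigma> ?Mx ?Oy \<otimes> ID ?My)
      = ID ?Ox \<otimes> disc ?Mx \<otimes> ID ?Oy \<otimes> disc ?My"
    by simp
  have discard_xy: "(ID ?Ox \<otimes> disc ?Mx \<otimes> ID ?Oy \<otimes> disc ?My) \<cdot> (?Px \<otimes> ?Py) = FA C j x \<otimes> FA C j y"
    unfolding FA_def using interchange[of ?Px "ID ?Ox \<otimes> disc ?Mx" ?Py "ID ?Oy \<otimes> disc ?My"] wx wy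
    by simp
  have "FA C j (seq_tens C x y) = (ID (tgt ?S) \<otimes> (disc ?Mx \<otimes> disc ?My)) \<cdot> (?S \<otimes> ID (?Mx \<oplus> ?My))
      \<cdot> (ID ?Ox \<otimes> \<sigma> ?Mx ?Oy \<otimes> ID ?My) \<cdot> (?Px \<otimes> ?Py) \<cdot> ?N"
    unfolding FA_def Phi_seq_tens[OF wx wy] by (simp add: seq_tens_simps disc_ob)
  also have "\<dots> = ?S \<cdot> (ID (?Ox \<oplus> ?Oy) \<otimes> disc ?Mx \<otimes> disc ?My) \<cdot> (ID ?Ox \<otimes> \<sigma> ?Mx ?Oy \<otimes> ID ?My)
      \<cdot> (?Px \<otimes> ?Py) \<cdot> ?N"
    using tensor_slide_assoc[of "(ID ?Ox \<otimes> \<sigma> ?Mx ?Oy \<otimes> ID ?My) \<cdot> (?Px \<otimes> ?Py) \<cdot> ?N"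
        ?S "disc ?Mx \<otimes> disc ?My"] wx wy
    by simp
  also have "\<dots> = ?S \<cdot> (ID ?Ox \<otimes> disc ?Mx \<otimes> ID ?Oy \<otimes> disc ?My) \<cdot> (?Px \<otimes> ?Py) \<cdot> ?N"
    using comp_assoc_subst[OF discard_swap, of "(?Px \<otimes> ?Py) \<cdot> ?N"] wx wy by simp
  also have "\<dots> = ?S \<cdot> (FA C j x \<otimes> FA C j y) \<cdot> ?N"
    using comp_assoc_subst[OF discard_xy, of ?N] wx wy by simp
  finally show ?thesis .
qed

section \<open>Soundness of the congruence\<close>

definition FA_agree :: "nat \<Rightarrow> ('o, 'm) sseq \<Rightarrow> ('o, 'm) sseq \<Rightarrow> bool" where
  "FA_agree n a b \<longleftrightarrow> (\<forall>k\<le>n. FA C k a = FA C k b)"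

definition parallel :: "('o, 'm) sseq \<Rightarrow> ('o, 'm) sseq \<Rightarrow> bool" where
  "parallel a b \<longleftrightarrow> wf_seq C a \<and> wf_seq C b \<and> inp a = inp b \<and> outp a = outp b"

lemma FA_agree_0: "wf_seq C a \<Longrightarrow> wf_seq C b \<Longrightarrow> FA_agree 0 a b"
  unfolding FA_agree_def by (simp add: FA_0)

lemma FA_agree_delay:
  assumes "wf_seq C a" and "wf_seq C b" and "FA_agree n a b"
  shows "FA_agree (Suc n) (delay C a) (delay C b)"
  unfolding FA_agree_def
proof (intro allI impI)
  fix k assume "k \<le> Suc n"
  then show "FA C k (delay C a) = FA C k (delay C b)"
    using assms by (cases k) (auto simp: FA_agree_def FA_0 FA_delay wf_seq_delay)
qed

lemma parallel_delay:
  assumes "parallel a b"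
  shows "parallel (delay C a) (delay C b)"
proof -
  from assms have "inp a = inp b" "outp a = outp b"
    unfolding parallel_def by simp_all
  then have "inp (delay C a) = inp (delay C b)" "outp (delay C a) = outp (delay C b)"
    by (auto simp: delay_def)
  then show ?thesis
    using assms wf_seq_delay unfolding parallel_def by blast
qed

lemma FA_agree_coinduct:
  assumes wf: "\<And>i. wf_seq C (as i) \<and> wf_seq C (bs i)"
    and step: "\<And>i m. m \<le> n \<Longrightarrow> FA_agree m (delay C (as (Suc i))) (delay C (bs (Suc i)))
                 \<Longrightarrow> FA_agree m (as i) (bs i)"
  shows "FA_agree n (as i) (bs i)"
proof -
  have "m \<le> n \<Longrightarrow> FA_agree m (as i) (bs i)" for m
  proof (induction m arbitrary: i)
    case 0
    then show ?case using wf FA_agree_0 by blast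
  next
    case (Suc m)
    then have "FA_agree (Suc m) (delay C (as (Suc i))) (delay C (bs (Suc i)))"
      using wf FA_agree_delay by simp
    then show ?case using step Suc.prems by blast
  qed
  then show ?thesis by simp
qed

lemma deriv_sound:
  assumes "deriv C G a b" and "\<forall>(x, y)\<in>G. parallel x y"
  shows "parallel a b \<and> (\<forall>n. (\<forall>(x, y)\<in>G. FA_agree n x y) \<longrightarrow> FA_agree n a b)"
  using assms
proof (induction rule: deriv.induct)
  case (hyp a b G)
  then show ?case by auto
next
  case (cm s k bk N c g G)
  then show ?case
    using FA_invariant_CM[of s k bk N c g] unfolding good_def parallel_def FA_agree_def by simp
next
  case (im s k bk p g G)
  then show ?case
    using FA_invariant_IM[of s k bk p g] unfolding good_def parallel_def FA_agree_def by simp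
next
  case (refl a G)
  then show ?case unfolding good_def parallel_def FA_agree_def by simp
next
  case (sym G a b)
  then show ?case unfolding parallel_def FA_agree_def by simp
next
  case (trans G a b c)
  then show ?case unfolding parallel_def FA_agree_def by simp
next
  case (comp_left G a b h)
  then show ?case
    by (auto simp: good_def parallel_def FA_agree_def wf_seq_comp FA_seq_comp seq_comp_simps)
next
  case (comp_right G a b h)
  then show ?case
    by (auto simp: good_def parallel_def FA_agree_def wf_seq_comp FA_seq_comp seq_comp_simps)
next
  case (tens_left G a b h)
  then show ?case
    by (auto simp: good_def parallel_def FA_agree_def wf_seq_tens FA_seq_tens seq_tens_simps
        out_shuffle_cong[of h h a b] in_unshuffle_cong[of h h a b])
next
  case (tens_right G a b h)
  then show ?case
    by (auto simp: good_def parallel_def FA_agree_def wf_seq_tens FA_seq_tens seq_tens_simps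
        out_shuffle_cong[of a b h h] in_unshuffle_cong[of a b h h])
next
  case (coind as bs G)
  let ?G = "\<lambda>i. insert (delay C (as (Suc i)), delay C (bs (Suc i))) G"
  have par: "parallel (as i) (bs i)" for i
    using coind.hyps(1) unfolding good_def parallel_def by simp
  have IH: "\<forall>m. (\<forall>(x, y)\<in>?G i. FA_agree m x y) \<longrightarrow> FA_agree m (as i) (bs i)" for i
    using coind.IH coind.prems par[of "Suc i", THEN parallel_delay] by blast
  have "FA_agree n (as 0) (bs 0)" if G: "\<forall>(x, y)\<in>G. FA_agree n x y" for n
  proof (rule FA_agree_coinduct)
    show "wf_seq C (as i) \<and> wf_seq C (bs i)" for i
      using par unfolding parallel_def by simp
    fix i m assume "m \<le> n" and "FA_agree m (delay C (as (Suc i))) (delay C (bs (Suc i)))"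
    with G have "\<forall>(x, y)\<in>?G i. FA_agree m x y"
      unfolding FA_agree_def by auto
    then show "FA_agree m (as i) (bs i)"
      using IH by blast
  qed
  then show ?case using par by blast
qed

end

theorem lemma4:
  fixes C :: "('o, 'm) dcat" and a b :: "('o, 'm) sseq"
  assumes "discard_cat C"
    and "wf_seq C a" and "regular a"
    and "wf_seq C b" and "regular b"
    and "inp a = inp b" and "outp a = outp b"
    and "sequiv C a b"
  shows "\<forall>k\<ge>1. FA C k a = FA C k b"
proof -
  interpret discard_category C by (rule discard_category.intro) (rule assms(1))
  have "FA_agree n a b" for n
    using deriv_sound[of "{}" a b] assms(8) unfolding sequiv_def by simp
  then show ?thesis unfolding FA_agree_def by blast
qed

end
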